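(* Let $\Omega$, $s$, $c$ be as in the context. If $\bar\rho\in X$ satisfies condition (N), then there exists a unique $p^*\in\Sigma(\bar\rho)$ such that $p^*\ge\tilde p$ on $\Omega$ for every $\tilde p\in\Sigma(\bar\rho)$; that is, $p^*$ is the largest $c$-concave maximizer of the dual problem.
   Context: $\Omega\subset\mathbb{R}^d$ bounded smooth domain. $s:\mathbb{R}\times\Omega\to\mathbb{R}\cup\{+\infty\}$: (s1) $s(\cdot,x)$ proper, lsc, convex; (s2) $s(z,x)=+\infty$ for $z<0$, $s(0,x)=0$, $\inf s>-\infty$, $\lim_{z\to\infty}\inf_x s(z,x)/z=+\infty$. $s^*(p,x)=\sup_z(pz-s(z,x))$; $\partial s^*$ is the subdifferential in $p$. $E^*(p)=\int_\Omega s^*(p(x),x)dx$, $E(\rho)=\int_\Omega s(\rho,x)dx$, $X=\{\rho\in L^1(\Omega):E(\rho)<\infty\}$, $X^*=\{p:\Omega\to[-\infty,\infty]$ measurable$:E^*(p)<\infty\}$. Cost $c$ on $\mathbb{R}^d\times\mathbb{R}^d$, nonnegative, symmetric, $c(x,x)=0$, $C^1_{loc}$, with $y\mapsto\nabla_xc(x_0,y)$ injective for all $x_0$. $p^c(y)=\inf_{x\in\Omega}p(x)+c(x,y)$, $q^{\bar c}(x)=\sup_{y\in\Omega}q(y)-c(x,y)$; $p$ is $c$-concave if $p^{c\bar c}=p$. $J^*(p,\bar\rho)=\int_\Omega\bar\rho\,p^c\,dx-E^*(p)$ and $\Sigma(\bar\rho)=\operatorname{argmax}_{p\in X^*,\,p^{c\bar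 c}=p}J^*(p,\bar\rho)$. Condition (N): $0<\int_\Omega\bar\rho<\lim_{b\to\infty}\int_\Omega\sup\partial s^*(b,x)dx$. *)

theory Defs
  imports "HOL-Analysis.Analysis"
begin

fun Ck_on :: "nat \<Rightarrow> 'a::euclidean_space set \<Rightarrow> ('a \<Rightarrow> real) \<Rightarrow> bool" where
  "Ck_on 0 U f = continuous_on U f"
| "Ck_on (Suc k) U f =
     (f differentiable_on U \<and> (\<forall>v. Ck_on k U (\<lambda>x. frechet_derivative f (at x) v)))"

definition smooth_on :: "'a::euclidean_space set \<Rightarrow> ('a \<Rightarrow> real) \<Rightarrow> bool" where
  "smooth_on U f \<longleftrightarrow> (\<forall>k. Ck_on k U f)"

definition bounded_smooth_domain :: "'a::euclidean_space set \<Rightarrow> bool" where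
  "bounded_smooth_domain \<Omega> \<longleftrightarrow> open \<Omega> \<and> bounded \<Omega> \<and> connected \<Omega> \<and> \<Omega> \<noteq> {} \<and>
     (\<forall>x0\<in>frontier \<Omega>. \<exists>U \<phi>. open U \<and> x0 \<in> U \<and> smooth_on U \<phi> \<and>
        (\<forall>x\<in>U. frechet_derivative \<phi> (at x) \<noteq> (\<lambda>v. 0)) \<and>
        \<Omega> \<inter> U = {x\<in>U. \<phi> x < 0})"

definition lsc :: "(real \<Rightarrow> ereal) \<Rightarrow> bool" where
  "lsc f \<longleftrightarrow> (\<forall>z. f z \<le> Liminf (at z) f)"

definition ereal_convex :: "(real \<Rightarrow> ereal) \<Rightarrow> bool" where
  "ereal_convex f \<longleftrightarrow> (\<forall>z1 z2 t. 0 \<le> t \<and> t \<le> 1 \<longrightarrow>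
      f ((1 - t) * z1 + t * z2) \<le> ereal (1 - t) * f z1 + ereal t * f z2)"

definition entropy_density :: "'a::euclidean_space set \<Rightarrow> (real \<Rightarrow> 'a \<Rightarrow> ereal) \<Rightarrow> bool" where
  "entropy_density \<Omega> s \<longleftrightarrow>
     (\<forall>x\<in>\<Omega>. (\<exists>z. s z x \<noteq> \<infinity>) \<and> (\<forall>z. s z x \<noteq> -\<infinity>)
            \<and> lsc (\<lambda>z. s z x) \<and> ereal_convex (\<lambda>z. s z x)) \<and>
     (\<forall>x\<in>\<Omega>. (\<forall>z<0. s z x = \<infinity>) \<and> s 0 x = 0) \<and>
     (\<exists>m::real. \<forall>x\<in>\<Omega>. \<forall>z. ereal m \<le> s z x) \<and>
     ((\<lambda>z. (INF x\<in>\<Omega>. s z x) / ereal z) \<longlongrightarrow> \<infinity>) at_top"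

definition admissible_cost :: "('a::euclidean_space \<Rightarrow> 'a \<Rightarrow> real) \<Rightarrow> bool" where
  "admissible_cost c \<longleftrightarrow>
     (\<forall>x y. 0 \<le> c x y) \<and> (\<forall>x y. c x y = c y x) \<and> (\<forall>x. c x x = 0) \<and>
     Ck_on 1 UNIV (\<lambda>(x, y). c x y) \<and>
     (\<forall>x0. inj (\<lambda>y. frechet_derivative (\<lambda>x. c x y) (at x0)))"

text \<open>s^*(p,x) = sup_z (p z - s(z,x)); terms with s(z,x) = +infinity contribute -infinity
  and are therefore omitted, which fixes the convention for p = +-infinity.\<close>
definition sconj :: "(real \<Rightarrow> 'a \<Rightarrow> ereal) \<Rightarrow> ereal \<Rightarrow> 'a \<Rightarrow> ereal" where
  "sconj s p x = (SUP z\<in>{z. s z x \<noteq> \<infinity>}. p * ereal z - s z x)"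

definition subdiff_sconj :: "(real \<Rightarrow> 'a \<Rightarrow> ereal) \<Rightarrow> real \<Rightarrow> 'a \<Rightarrow> real set" where
  "subdiff_sconj s b x =
     {z. \<forall>q::real. sconj s (ereal b) x + ereal (z * (q - b)) \<le> sconj s (ereal q) x}"

definition eintegral :: "'a::euclidean_space set \<Rightarrow> ('a \<Rightarrow> ereal) \<Rightarrow> ereal" where
  "eintegral \<Omega> f = enn2ereal (\<integral>\<^sup>+x. e2ennreal (f x) \<partial>lebesgue_on \<Omega>)
                    - enn2ereal (\<integral>\<^sup>+x. e2ennreal (- f x) \<partial>lebesgue_on \<Omega>)"

definition Efun :: "'a::euclidean_space set \<Rightarrow> (real \<Rightarrow> 'a \<Rightarrow> ereal) \<Rightarrow> ('a \<Rightarrow> real) \<Rightarrow> ereal" where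
  "Efun \<Omega> s \<rho> = eintegral \<Omega> (\<lambda>x. s (\<rho> x) x)"

definition Estar :: "'a::euclidean_space set \<Rightarrow> (real \<Rightarrow> 'a \<Rightarrow> ereal) \<Rightarrow> ('a \<Rightarrow> ereal) \<Rightarrow> ereal" where
  "Estar \<Omega> s p = eintegral \<Omega> (\<lambda>x. sconj s (p x) x)"

definition Xspace :: "'a::euclidean_space set \<Rightarrow> (real \<Rightarrow> 'a \<Rightarrow> ereal) \<Rightarrow> ('a \<Rightarrow> real) set" where
  "Xspace \<Omega> s = {\<rho>. integrable (lebesgue_on \<Omega>) \<rho> \<and> Efun \<Omega> s \<rho> < \<infinity>}"

definition Xstar :: "'a::euclidean_space set \<Rightarrow> (real \<Rightarrow> 'a \<Rightarrow> ereal) \<Rightarrow> ('a \<Rightarrow> ereal) set" where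
  "Xstar \<Omega> s = {p. p \<in> borel_measurable (lebesgue_on \<Omega>) \<and> Estar \<Omega> s p < \<infinity>}"

definition ctrans :: "'a set \<Rightarrow> ('a \<Rightarrow> 'a \<Rightarrow> real) \<Rightarrow> ('a \<Rightarrow> ereal) \<Rightarrow> 'a \<Rightarrow> ereal" where
  "ctrans \<Omega> c p y = (INF x\<in>\<Omega>. p x + ereal (c x y))"

definition ctrans_bar :: "'a set \<Rightarrow> ('a \<Rightarrow> 'a \<Rightarrow> real) \<Rightarrow> ('a \<Rightarrow> ereal) \<Rightarrow> 'a \<Rightarrow> ereal" where
  "ctrans_bar \<Omega> c q x = (SUP y\<in>\<Omega>. q y - ereal (c x y))"

definition c_concave :: "'a set \<Rightarrow> ('a \<Rightarrow> 'a \<Rightarrow> real) \<Rightarrow> ('a \<Rightarrow> ereal) \<Rightarrow> bool" where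
  "c_concave \<Omega> c p \<longleftrightarrow> (\<forall>x\<in>\<Omega>. ctrans_bar \<Omega> c (ctrans \<Omega> c p) x = p x)"

definition Jstar :: "'a::euclidean_space set \<Rightarrow> (real \<Rightarrow> 'a \<Rightarrow> ereal) \<Rightarrow> ('a \<Rightarrow> 'a \<Rightarrow> real)
                     \<Rightarrow> ('a \<Rightarrow> ereal) \<Rightarrow> ('a \<Rightarrow> real) \<Rightarrow> ereal" where
  "Jstar \<Omega> s c p \<rho> = eintegral \<Omega> (\<lambda>y. ereal (\<rho> y) * ctrans \<Omega> c p y) - Estar \<Omega> s p"

definition Sigma_max :: "'a::euclidean_space set \<Rightarrow> (real \<Rightarrow> 'a \<Rightarrow> ereal) \<Rightarrow> ('a \<Rightarrow> 'a \<Rightarrow> real)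
                         \<Rightarrow> ('a \<Rightarrow> real) \<Rightarrow> ('a \<Rightarrow> ereal) set" where
  "Sigma_max \<Omega> s c \<rho> =
     {p. p \<in> Xstar \<Omega> s \<and> c_concave \<Omega> c p \<and>
         (\<forall>q. q \<in> Xstar \<Omega> s \<and> c_concave \<Omega> c q \<longrightarrow> Jstar \<Omega> s c q \<rho> \<le> Jstar \<Omega> s c p \<rho>)}"

definition condN :: "'a::euclidean_space set \<Rightarrow> (real \<Rightarrow> 'a \<Rightarrow> ereal) \<Rightarrow> ('a \<Rightarrow> real) \<Rightarrow> bool" where
  "condN \<Omega> s \<rho> \<longleftrightarrow>
     0 < integral\<^sup>L (lebesgue_on \<Omega>) \<rho> \<and>
     ennreal (integral\<^sup>L (lebesgue_on \<Omega>) \<rho>) <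
       Lim at_top (\<lambda>b. \<integral>\<^sup>+x. e2ennreal (Sup (ereal ` subdiff_sconj s b x)) \<partial>lebesgue_on \<Omega>)"

end

theory Submission
  imports Defs
begin

text \<open>A c-concave potential with values in the extended reals is either identically \<open>\<infinity>\<close>
  (then its dual energy is infinite), identically \<open>-\<infinity>\<close> (then its dual value is \<open>-\<infinity>\<close>),
  or real valued with oscillation at most \<open>max c\<close>. So it suffices to maximise the dual
  functional \<open>J\<close> over bounded real c-concave potentials. These share a modulus of continuity
  inherited from \<open>c\<close>, hence pointwise monotone limits are uniform, stay c-concave, and \<open>J\<close>
  passes to the limit. Condition (N) makes \<open>J\<close> coercive: raising a potential by \<open>t\<close> gains at
  most \<open>t \<integral>\<rho>\<close> but costs at least \<open>t (\<integral>\<rho> + \<delta>)\<close> in \<open>E\<^sup>*\<close>, so superlevel sets of \<open>J\<close> are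
  uniformly bounded. Finally \<open>J p + J q \<le> J (max p q) + J ((min p q)\<^sup>c\<^sup>c)\<close>, so near-maximisers
  can be combined by pointwise maxima: this gives a maximiser, shows that the maximisers are
  closed under \<open>max\<close>, and the supremum of maximisers approximating the pointwise supremum on a
  countable dense set is the largest maximiser.\<close>

section \<open>Lower integrals of non-measurable functions\<close>

text \<open>The entropy density is not assumed measurable in \<open>x\<close>, so the dual energy below is the
  \<open>\<integral>\<^sup>+\<close> of a possibly non-measurable function, i.e. a lower integral. For these only the
  following weak forms of additivity hold.\<close>

lemma nn_integral_measurable_minorant:
  fixes f :: "'b \<Rightarrow> ennreal"
  obtains g where "g \<in> borel_measurable M" "\<And>x. g x \<le> f x" "integral\<^sup>N M g = integral\<^sup>N M f"
proof -
  let ?A = "integral\<^sup>S M ` {g. simple_function M g \<and> g \<le> f}"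
  have "(\<lambda>_. 0) \<in> {g. simple_function M g \<and> g \<le> f}"
    by (auto simp: le_fun_def)
  then have "?A \<noteq> {}" by blast
  from ennreal_Sup_countable_SUP[OF this] obtain h :: "nat \<Rightarrow> ennreal"
    where h: "range h \<subseteq> ?A" "Sup ?A = (SUP i. h i)" by blast
  then have "\<forall>i. \<exists>g. simple_function M g \<and> g \<le> f \<and> h i = integral\<^sup>S M g"
    by blast
  then obtain G where G: "\<And>i. simple_function M (G i)" "\<And>i. G i \<le> f"
    "\<And>i. h i = integral\<^sup>S M (G i)"
    by metis
  define g where "g x = (SUP i. G i x)" for x
  have g_le: "g x \<le> f x" for x
    unfolding g_def using G(2) by (simp add: le_fun_def SUP_least)
  have "integral\<^sup>N M f = (SUP i. h i)"
    using h(2) by (simp add: nn_integral_def)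
  also have "\<dots> = (SUP i. integral\<^sup>N M (G i))"
    by (simp add: G(1,3) nn_integral_eq_simple_integral)
  also have "\<dots> \<le> integral\<^sup>N M g"
    by (intro SUP_least nn_integral_mono) (auto simp: g_def intro: SUP_upper)
  finally have "integral\<^sup>N M f \<le> integral\<^sup>N M g" .
  moreover have "integral\<^sup>N M g \<le> integral\<^sup>N M f"
    using g_le by (auto intro: nn_integral_mono)
  moreover have "g \<in> borel_measurable M"
    unfolding g_def using G(1) by (intro borel_measurable_SUP) (auto intro: borel_measurable_simple_function)
  ultimately show thesis
    using g_le by (intro that) auto
qed

lemma nn_integral_superadditive:
  fixes f g :: "'b \<Rightarrow> ennreal"
  shows "integral\<^sup>N M f + integral\<^sup>N M g \<le> (\<integral>\<^sup>+x. f x + g x \<partial>M)"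
proof -
  obtain f' where f': "f' \<in> borel_measurable M" "\<And>x. f' x \<le> f x" "integral\<^sup>N M f' = integral\<^sup>N M f"
    using nn_integral_measurable_minorant[of M f] by blast
  obtain g' where g': "g' \<in> borel_measurable M" "\<And>x. g' x \<le> g x" "integral\<^sup>N M g' = integral\<^sup>N M g"
    using nn_integral_measurable_minorant[of M g] by blast
  have "integral\<^sup>N M f + integral\<^sup>N M g = (\<integral>\<^sup>+x. f' x + g' x \<partial>M)"
    using f' g' by (simp add: nn_integral_add)
  also have "\<dots> \<le> (\<integral>\<^sup>+x. f x + g x \<partial>M)"
    using f'(2) g'(2) by (intro nn_integral_mono add_mono)
  finally show ?thesis .
qed

lemma nn_integral_cmult_le:
  fixes f :: "'b \<Rightarrow> ennreal"
  shows "a * integral\<^sup>N M f \<le> (\<integral>\<^sup>+x. a * f x \<partial>M)"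
proof -
  obtain f' where f': "f' \<in> borel_measurable M" "\<And>x. f' x \<le> f x" "integral\<^sup>N M f' = integral\<^sup>N M f"
    using nn_integral_measurable_minorant[of M f] by blast
  have "a * integral\<^sup>N M f = (\<integral>\<^sup>+x. a * f' x \<partial>M)"
    using f' by (simp add: nn_integral_cmult)
  also have "\<dots> \<le> (\<integral>\<^sup>+x. a * f x \<partial>M)"
    using f'(2) by (intro nn_integral_mono mult_left_mono) auto
  finally show ?thesis .
qed

lemma nn_integral_le_add_const:
  fixes f g :: "'b \<Rightarrow> ennreal"
  assumes "\<And>x. x \<in> space M \<Longrightarrow> f x \<le> g x + a" and "a < top"
  shows "integral\<^sup>N M f \<le> integral\<^sup>N M g + a * emeasure M (space M)"
proof -
  obtain f' where f': "f' \<in> borel_measurable M" "\<And>x. f' x \<le> f x" "integral\<^sup>N M f' = integral\<^sup>N M f"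
    using nn_integral_measurable_minorant[of M f] by blast
  have "integral\<^sup>N M f \<le> (\<integral>\<^sup>+x. (f' x - a) + a \<partial>M)"
    unfolding f'(3)[symmetric] by (intro nn_integral_mono) (auto simp: diff_add_self_ennreal)
  also have "\<dots> = (\<integral>\<^sup>+x. f' x - a \<partial>M) + a * emeasure M (space M)"
    using f' by (subst nn_integral_add) auto
  also have "(\<integral>\<^sup>+x. f' x - a \<partial>M) \<le> integral\<^sup>N M g"
  proof (intro nn_integral_mono)
    fix x assume "x \<in> space M"
    then have "f' x \<le> a + g x"
      using f'(2) assms(1) by (metis add.commute order_trans)
    then show "f' x - a \<le> g x"
      using assms(2) unfolding ennreal_minus_le_iff by auto
  qed
  finally show ?thesis by (simp add: add_right_mono)
qed

lemma nn_integral_split_indicator: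
  fixes f :: "'b \<Rightarrow> ennreal"
  assumes U: "U \<in> sets M"
  shows "integral\<^sup>N M f =
    (\<integral>\<^sup>+x. f x * indicator U x \<partial>M) + (\<integral>\<^sup>+x. f x * indicator (space M - U) x \<partial>M)"
proof (rule antisym)
  obtain f' where f': "f' \<in> borel_measurable M" "\<And>x. f' x \<le> f x" "integral\<^sup>N M f' = integral\<^sup>N M f"
    using nn_integral_measurable_minorant[of M f] by blast
  have "integral\<^sup>N M f = (\<integral>\<^sup>+x. f' x * indicator U x + f' x * indicator (space M - U) x \<partial>M)"
    unfolding f'(3)[symmetric] by (intro nn_integral_cong) (auto simp: indicator_def)
  also have "\<dots> = (\<integral>\<^sup>+x. f' x * indicator U x \<partial>M) + (\<integral>\<^sup>+x. f' x * indicator (space M - U) x \<partial>M)"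
    using f'(1) U by (intro nn_integral_add) auto
  also have "\<dots> \<le> (\<integral>\<^sup>+x. f x * indicator U x \<partial>M) + (\<integral>\<^sup>+x. f x * indicator (space M - U) x \<partial>M)"
    using f'(2) by (intro add_mono nn_integral_mono mult_right_mono) auto
  finally show "integral\<^sup>N M f \<le> \<dots>" .
next
  have "(\<integral>\<^sup>+x. f x * indicator U x \<partial>M) + (\<integral>\<^sup>+x. f x * indicator (space M - U) x \<partial>M)
        \<le> (\<integral>\<^sup>+x. f x * indicator U x + f x * indicator (space M - U) x \<partial>M)"
    by (rule nn_integral_superadditive)
  also have "\<dots> = integral\<^sup>N M f"
    by (intro nn_integral_cong) (auto simp: indicator_def)
  finally show "(\<integral>\<^sup>+x. f x * indicator U x \<partial>M) + (\<integral>\<^sup>+x. f x * indicator (space M - U) x \<partial>M)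
    \<le> integral\<^sup>N M f" .
qed

lemma bounded_finite_net:
  fixes S :: "'b::heine_borel set"
  assumes "bounded S" "e > 0"
  obtains F where "finite F" "F \<subseteq> S" "\<And>x. x \<in> S \<Longrightarrow> \<exists>f\<in>F. dist x f < e"
proof -
  have "closure S \<subseteq> (\<Union>f\<in>S. ball f e)"
    using assms(2) by (auto simp: closure_approachable)
  moreover have "compact (closure S)"
    using assms(1) by (simp add: compact_closure)
  ultimately obtain F where F: "F \<subseteq> S" "finite F" "closure S \<subseteq> (\<Union>f\<in>F. ball f e)"
    by (elim compactE_image) auto
  have "\<exists>f\<in>F. dist x f < e" if "x \<in> S" for x
    using that closure_subset F(3) by (force simp: dist_commute)
  with F(1,2) that show thesis by blast
qed

lemma continuous_on_if_modulus:
  fixes f :: "'b::metric_space \<Rightarrow> real"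
  assumes "\<And>e. e > 0 \<Longrightarrow> \<exists>d>0. \<forall>x\<in>S. \<forall>x'\<in>S. dist x x' < d \<longrightarrow> \<bar>f x - f x'\<bar> \<le> e"
  shows "continuous_on S f"
proof (rule uniformly_continuous_imp_continuous, unfold uniformly_continuous_on_def, intro allI impI)
  fix e :: real assume "e > 0"
  then obtain d where "d > 0" "\<forall>x\<in>S. \<forall>x'\<in>S. dist x x' < d \<longrightarrow> \<bar>f x - f x'\<bar> \<le> e / 2"
    using assms[of "e / 2"] by auto
  moreover have "e / 2 < e"
    using \<open>e > 0\<close> by simp
  ultimately show "\<exists>d>0. \<forall>x\<in>S. \<forall>x'\<in>S. dist x' x < d \<longrightarrow> dist (f x') (f x) < e"
    by (metis dist_real_def le_less_trans)
qed

lemma equicontinuous_imp_uniform_limit: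
  fixes f :: "nat \<Rightarrow> 'b::heine_borel \<Rightarrow> real"
  assumes "bounded S"
    and modulus: "\<And>e. e > 0 \<Longrightarrow> \<exists>d>0. \<forall>n. \<forall>x\<in>S. \<forall>x'\<in>S. dist x x' < d \<longrightarrow> \<bar>f n x - f n x'\<bar> \<le> e"
    and lim: "\<And>x. x \<in> S \<Longrightarrow> (\<lambda>n. f n x) \<longlonglongrightarrow> g x"
    and "e > 0"
  shows "\<exists>N. \<forall>n\<ge>N. \<forall>x\<in>S. \<bar>f n x - g x\<bar> \<le> e"
proof -
  obtain d where "d > 0"
    and d: "\<And>n x x'. x \<in> S \<Longrightarrow> x' \<in> S \<Longrightarrow> dist x x' < d \<Longrightarrow> \<bar>f n x - f n x'\<bar> \<le> e / 3"
    using modulus[of "e / 3"] \<open>e > 0\<close> by auto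
  obtain F where F: "finite F" "F \<subseteq> S" "\<And>x. x \<in> S \<Longrightarrow> \<exists>f\<in>F. dist x f < d"
    using bounded_finite_net[OF \<open>bounded S\<close> \<open>d > 0\<close>] by blast
  have "\<forall>y\<in>F. \<forall>\<^sub>F n in sequentially. dist (f n y) (g y) < e / 3"
    using F(2) lim \<open>e > 0\<close> unfolding tendsto_iff by (meson divide_pos_pos subsetD zero_less_numeral)
  with F(1) have "\<forall>\<^sub>F n in sequentially. \<forall>y\<in>F. dist (f n y) (g y) < e / 3"
    by (rule eventually_ball_finite)
  then obtain N where N: "\<And>n y. n \<ge> N \<Longrightarrow> y \<in> F \<Longrightarrow> \<bar>f n y - g y\<bar> < e / 3"
    unfolding eventually_sequentially dist_real_def by blast
  have "\<bar>f n x - g x\<bar> \<le> e" if "n \<ge> N" "x \<in> S" for n x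
  proof -
    obtain y where y: "y \<in> F" "dist x y < d"
      using F(3) \<open>x \<in> S\<close> by blast
    with F(2) have "y \<in> S" by blast
    have "(\<lambda>k. \<bar>f k x - f k y\<bar>) \<longlonglongrightarrow> \<bar>g x - g y\<bar>"
      using \<open>x \<in> S\<close> \<open>y \<in> S\<close> by (intro tendsto_intros lim)
    then have "\<bar>g x - g y\<bar> \<le> e / 3"
      using d[OF \<open>x \<in> S\<close> \<open>y \<in> S\<close> y(2)] by (intro LIMSEQ_le_const2) auto
    then show ?thesis
      using d[OF \<open>x \<in> S\<close> \<open>y \<in> S\<close> y(2), of n] N[OF \<open>n \<ge> N\<close> y(1)] by linarith
  qed
  then show ?thesis by blast
qed

lemma le_at_closure_point:
  fixes f g :: "'b::metric_space \<Rightarrow> real"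
  assumes "continuous_on S f" "continuous_on S g" "open S" "x \<in> S" "x \<in> closure E"
    and "\<And>y. y \<in> E \<Longrightarrow> f y \<le> g y"
  shows "f x \<le> g x"
proof -
  obtain u where "\<And>n. u n \<in> E" "u \<longlonglongrightarrow> x"
    using \<open>x \<in> closure E\<close> unfolding closure_sequential by blast
  moreover have "isCont f x" "isCont g x"
    using assms(1,2,4) continuous_on_eq_continuous_at[OF assms(3)] by auto
  ultimately have "(\<lambda>n. f (u n) - g (u n)) \<longlonglongrightarrow> f x - g x"
    by (intro tendsto_diff isCont_tendsto_compose[of x f u] isCont_tendsto_compose[of x g u])
  then have "f x - g x \<le> 0"
    using assms(6) \<open>\<And>n. u n \<in> E\<close> by (intro LIMSEQ_le_const2) auto
  then show ?thesis by simp
qed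

lemma tendsto_at_top_SUP_mono:
  fixes f :: "'b::linorder \<Rightarrow> 'c::{complete_linorder, linorder_topology}"
  assumes "mono f"
  shows "(f \<longlongrightarrow> (SUP b. f b)) at_top"
proof (rule order_tendstoI)
  fix a assume "a < (SUP b. f b)"
  then obtain b where "a < f b"
    by (auto simp: less_SUP_iff)
  then show "\<forall>\<^sub>F t in at_top. a < f t"
    unfolding eventually_at_top_linorder using assms by (meson less_le_trans monoD)
next
  fix a assume "(SUP b. f b) < a"
  then show "\<forall>\<^sub>F t in at_top. f t < a"
    by (intro always_eventually allI) (meson SUP_upper UNIV_I le_less_trans)
qed

primrec running_max :: "(nat \<Rightarrow> 'b \<Rightarrow> real) \<Rightarrow> nat \<Rightarrow> nat \<Rightarrow> 'b \<Rightarrow> real" where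
  "running_max p n 0 = p n"
| "running_max p n (Suc m) = (\<lambda>x. max (running_max p n m x) (p (n + Suc m) x))"

lemma running_max_ge: "j \<le> m \<Longrightarrow> p (n + j) x \<le> running_max p n m x"
  by (induction m) (auto simp: le_Suc_eq le_max_iff_disj)

lemma incseq_running_max: "incseq (\<lambda>m. running_max p n m x)"
  by (rule incseq_SucI) simp

lemma running_max_Suc_le: "running_max p (Suc n) m x \<le> running_max p n (Suc m) x"
  by (induction m) (auto intro: max.mono)

lemma running_max_closed:
  assumes "\<And>P Q. P \<in> K \<Longrightarrow> Q \<in> K \<Longrightarrow> (\<lambda>x. max (P x) (Q x)) \<in> K" and "\<And>i. p i \<in> K"
  shows "running_max p n m \<in> K"
  by (induction m) (simp_all add: assms)


locale dual_problem =
  fixes \<Omega> :: "'a::euclidean_space set" and s :: "real \<Rightarrow> 'a \<Rightarrow> ereal"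
    and c :: "'a \<Rightarrow> 'a \<Rightarrow> real" and \<rho> :: "'a \<Rightarrow> real" and s_min :: real
  assumes open_\<Omega>: "open \<Omega>" and bounded_\<Omega>: "bounded \<Omega>" and \<Omega>_nonempty: "\<Omega> \<noteq> {}"
    and continuous_c: "continuous_on UNIV (\<lambda>(x, y). c x y)"
    and c_nonneg: "\<And>x y. 0 \<le> c x y" and c_diag: "\<And>x. c x x = 0"
    and s_not_MInf: "\<And>x z. x \<in> \<Omega> \<Longrightarrow> s z x \<noteq> -\<infinity>"
    and s_neg: "\<And>x z. x \<in> \<Omega> \<Longrightarrow> z < 0 \<Longrightarrow> s z x = \<infinity>"
    and s_zero: "\<And>x. x \<in> \<Omega> \<Longrightarrow> s 0 x = 0"
    and s_lower_bound: "\<And>x z. x \<in> \<Omega> \<Longrightarrow> ereal s_min \<le> s z x"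
    and s_superlinear: "((\<lambda>z. (INF x\<in>\<Omega>. s z x) / ereal z) \<longlongrightarrow> \<infinity>) at_top"
    and integrable_\<rho>: "integrable (lebesgue_on \<Omega>) \<rho>"
    and Efun_\<rho>: "Efun \<Omega> s \<rho> < \<infinity>"
    and condN_\<rho>: "condN \<Omega> s \<rho>"
begin

section \<open>The convex conjugate of the entropy density\<close>

lemma s_finiteD:
  assumes "x \<in> \<Omega>" "s z x \<noteq> \<infinity>"
  shows "0 \<le> z" "\<exists>r. s z x = ereal r \<and> s_min \<le> r"
proof -
  show "0 \<le> z"
    using assms s_neg[of x z] by (meson not_le)
  show "\<exists>r. s z x = ereal r \<and> s_min \<le> r"
    using assms s_not_MInf[of x z] s_lower_bound[of x z] by (cases "s z x") auto
qed

lemma s_superlinear_bound: "\<exists>Z>0. \<forall>x\<in>\<Omega>. \<forall>z\<ge>Z. ereal (B * z) \<le> s z x"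
proof -
  have "\<forall>\<^sub>F z in at_top. ereal B < (INF x\<in>\<Omega>. s z x) / ereal z"
    using s_superlinear by (simp add: tendsto_PInfty)
  then obtain N where N: "\<And>z. z \<ge> N \<Longrightarrow> ereal B < (INF x\<in>\<Omega>. s z x) / ereal z"
    by (auto simp: eventually_at_top_linorder)
  have "ereal (B * z) \<le> s z x" if "x \<in> \<Omega>" "z \<ge> max N 1" for x z
  proof -
    have "z > 0" and lt: "ereal B < (INF x\<in>\<Omega>. s z x) / ereal z"
      using N that by auto
    have le: "(INF x\<in>\<Omega>. s z x) \<le> s z x"
      using \<open>x \<in> \<Omega>\<close> by (rule INF_lower)
    show ?thesis
    proof (cases "(INF x\<in>\<Omega>. s z x)")
      case (real r)
      with lt \<open>z > 0\<close> have "B * z < r"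
        by (simp add: field_simps)
      with le real show ?thesis
        by (metis ereal_less_eq(3) less_imp_le order_trans)
    qed (use le lt \<open>z > 0\<close> in auto)
  qed
  then show ?thesis
    by (intro exI[of _ "max N 1"]) auto
qed

lemma sconj_nonneg: "x \<in> \<Omega> \<Longrightarrow> 0 \<le> sconj s p x"
  unfolding sconj_def by (rule SUP_upper2[of 0]) (auto simp: s_zero zero_ereal_def[symmetric])

lemma sconj_mono:
  assumes "x \<in> \<Omega>" "p \<le> q"
  shows "sconj s p x \<le> sconj s q x"
  unfolding sconj_def
proof (rule SUP_mono)
  fix z assume z: "z \<in> {z. s z x \<noteq> \<infinity>}"
  then obtain r where r: "s z x = ereal r"
    using s_finiteD[OF \<open>x \<in> \<Omega>\<close>] by auto
  have "p * ereal z \<le> q * ereal z"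
    using z s_finiteD(1)[OF \<open>x \<in> \<Omega>\<close>] \<open>p \<le> q\<close> by (simp add: ereal_mult_right_mono)
  then have "p * ereal z - s z x \<le> q * ereal z - s z x"
    using r by (simp add: ereal_minus_mono)
  with z show "\<exists>z'\<in>{z. s z x \<noteq> \<infinity>}. p * ereal z - s z x \<le> q * ereal z' - s z' x"
    by blast
qed

lemma sconj_le_ereal:
  assumes "x \<in> \<Omega>" and "\<And>z r. s z x = ereal r \<Longrightarrow> b * z - r \<le> K"
  shows "sconj s (ereal b) x \<le> ereal K"
  unfolding sconj_def
proof (rule SUP_least)
  fix z assume "z \<in> {z. s z x \<noteq> \<infinity>}"
  then obtain r where "s z x = ereal r"
    using s_finiteD[OF \<open>x \<in> \<Omega>\<close>] by auto
  then show "ereal b * ereal z - s z x \<le> ereal K"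
    using assms(2) by simp
qed

lemma sconj_bounded: "\<exists>K. \<forall>x\<in>\<Omega>. \<forall>b. \<bar>b\<bar> \<le> M \<longrightarrow> sconj s (ereal b) x \<le> ereal K"
proof -
  obtain Z where Z: "\<And>x z. x \<in> \<Omega> \<Longrightarrow> z \<ge> Z \<Longrightarrow> ereal (M * z) \<le> s z x"
    using s_superlinear_bound[of M] by blast
  have "sconj s (ereal b) x \<le> ereal (max 0 (M * Z - s_min))" if "x \<in> \<Omega>" "\<bar>b\<bar> \<le> M" for x b
  proof (rule sconj_le_ereal[OF \<open>x \<in> \<Omega>\<close>])
    fix z r assume r: "s z x = ereal r"
    then have "0 \<le> z" "s_min \<le> r"
      using s_finiteD(1)[OF \<open>x \<in> \<Omega>\<close>] s_lower_bound[OF \<open>x \<in> \<Omega>\<close>, of z] by auto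
    have "b * z \<le> M * z"
      using \<open>0 \<le> z\<close> \<open>\<bar>b\<bar> \<le> M\<close> by (intro mult_right_mono) auto
    moreover have "z \<le> Z \<Longrightarrow> M * z \<le> M * Z"
      using \<open>0 \<le> z\<close> \<open>\<bar>b\<bar> \<le> M\<close> by (intro mult_left_mono) auto
    moreover have "Z \<le> z \<Longrightarrow> M * z \<le> r"
      using Z[OF \<open>x \<in> \<Omega>\<close>, of z] r by simp
    ultimately show "b * z - r \<le> max 0 (M * Z - s_min)"
      using \<open>s_min \<le> r\<close> by linarith
  qed
  then show ?thesis by blast
qed

definition sstar :: "real \<Rightarrow> 'a \<Rightarrow> real" where
  "sstar b x = real_of_ereal (sconj s (ereal b) x)"

lemma sconj_eq_sstar:
  assumes "x \<in> \<Omega>"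
  shows "sconj s (ereal b) x = ereal (sstar b x)"
proof -
  obtain K where "sconj s (ereal b) x \<le> ereal K"
    using sconj_bounded[of "\<bar>b\<bar>"] assms by blast
  with sconj_nonneg[OF assms, of "ereal b"] show ?thesis
    unfolding sstar_def by (cases "sconj s (ereal b) x") auto
qed

lemma sstar_nonneg: "x \<in> \<Omega> \<Longrightarrow> 0 \<le> sstar b x"
  using sconj_nonneg[of x "ereal b"] sconj_eq_sstar[of x b] by simp

lemma sstar_bounded: "\<exists>K. \<forall>x\<in>\<Omega>. \<forall>b. \<bar>b\<bar> \<le> M \<longrightarrow> sstar b x \<le> K"
  using sconj_bounded[of M] sconj_eq_sstar by fastforce

lemma sstar_ge: "x \<in> \<Omega> \<Longrightarrow> s z x = ereal r \<Longrightarrow> b * z - r \<le> sstar b x"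
  using SUP_upper[of z "{z. s z x \<noteq> \<infinity>}" "\<lambda>z. ereal b * ereal z - s z x"] sconj_eq_sstar[of x b]
  by (simp add: sconj_def)

lemma sstar_leI: "x \<in> \<Omega> \<Longrightarrow> (\<And>z r. s z x = ereal r \<Longrightarrow> b * z - r \<le> K) \<Longrightarrow> sstar b x \<le> K"
  using sconj_le_ereal[of x b K] sconj_eq_sstar[of x b] by simp

lemma sstar_mono: "x \<in> \<Omega> \<Longrightarrow> b \<le> b' \<Longrightarrow> sstar b x \<le> sstar b' x"
  using sconj_mono[of x "ereal b" "ereal b'"] sconj_eq_sstar[of x] by simp

lemma sstar_lipschitz:
  "\<exists>Z>0. \<forall>x\<in>\<Omega>. \<forall>b b'. b \<le> b' \<longrightarrow> \<bar>b'\<bar> \<le> M \<longrightarrow> sstar b' x \<le> sstar b x + (b' - b) * Z"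
proof -
  obtain Z where "Z > 0" and Z: "\<And>x z. x \<in> \<Omega> \<Longrightarrow> z \<ge> Z \<Longrightarrow> ereal (M * z) \<le> s z x"
    using s_superlinear_bound[of M] by blast
  have "sstar b' x \<le> sstar b x + (b' - b) * Z" if "x \<in> \<Omega>" "b \<le> b'" "\<bar>b'\<bar> \<le> M" for x b b'
  proof (rule sstar_leI[OF \<open>x \<in> \<Omega>\<close>])
    fix z r assume r: "s z x = ereal r"
    then have "0 \<le> z"
      using s_finiteD(1)[OF \<open>x \<in> \<Omega>\<close>] by simp
    show "b' * z - r \<le> sstar b x + (b' - b) * Z"
    proof (cases "z \<le> Z")
      case True
      then have "(b' - b) * z \<le> (b' - b) * Z"
        using \<open>b \<le> b'\<close> by (intro mult_left_mono) auto
      with sstar_ge[OF \<open>x \<in> \<Omega>\<close> r, of b] show ?thesis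
        by (simp add: algebra_simps)
    next
      case False
      then have "b' * z \<le> r"
        using Z[OF \<open>x \<in> \<Omega>\<close>, of z] r \<open>0 \<le> z\<close> \<open>\<bar>b'\<bar> \<le> M\<close>
        by (smt (verit, best) ereal_less_eq(3) mult_right_mono)
      moreover have "0 \<le> (b' - b) * Z"
        using \<open>b \<le> b'\<close> \<open>Z > 0\<close> by simp
      ultimately show ?thesis
        using sstar_nonneg[OF \<open>x \<in> \<Omega>\<close>, of b] by linarith
    qed
  qed
  with \<open>Z > 0\<close> show ?thesis by blast
qed

lemma sstar_le_shift:
  "\<exists>Z>0. \<forall>x\<in>\<Omega>. \<forall>b b' e. \<bar>b\<bar> \<le> M \<longrightarrow> 0 \<le> e \<longrightarrow> b \<le> b' + e \<longrightarrow> sstar b x \<le> sstar b' x + e * Z"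
proof -
  obtain Z where "Z > 0" and Z: "\<And>x b b'. x \<in> \<Omega> \<Longrightarrow> b \<le> b' \<Longrightarrow> \<bar>b'\<bar> \<le> M \<Longrightarrow>
      sstar b' x \<le> sstar b x + (b' - b) * Z"
    using sstar_lipschitz[of M] by blast
  have "sstar b x \<le> sstar b' x + e * Z" if "x \<in> \<Omega>" "\<bar>b\<bar> \<le> M" "0 \<le> e" "b \<le> b' + e" for x b b' e
  proof (cases "b' \<le> b")
    case True
    then have "sstar b x \<le> sstar b' x + (b - b') * Z"
      using Z that(1,2) by blast
    also have "(b - b') * Z \<le> e * Z"
      using that(4) \<open>Z > 0\<close> by (intro mult_right_mono) auto
    finally show ?thesis by simp
  next
    case False
    moreover have "0 \<le> e * Z"
      using \<open>0 \<le> e\<close> \<open>Z > 0\<close> by simp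
    ultimately show ?thesis
      using sstar_mono[OF \<open>x \<in> \<Omega>\<close>, of b b'] by linarith
  qed
  with \<open>Z > 0\<close> show ?thesis by blast
qed

lemma sstar_convex:
  assumes "x \<in> \<Omega>"
  shows "convex_on UNIV (\<lambda>b. sstar b x)"
proof (rule convex_onI)
  fix t a b :: real assume "0 < t" "t < 1"
  show "sstar ((1 - t) *\<^sub>R a + t *\<^sub>R b) x \<le> (1 - t) * sstar a x + t * sstar b x"
  proof (rule sstar_leI[OF assms])
    fix z r assume r: "s z x = ereal r"
    have "((1 - t) *\<^sub>R a + t *\<^sub>R b) * z - r = (1 - t) * (a * z - r) + t * (b * z - r)"
      by (simp add: algebra_simps)
    also have "\<dots> \<le> (1 - t) * sstar a x + t * sstar b x"
      using sstar_ge[OF assms r, of a] sstar_ge[OF assms r, of b] \<open>0 < t\<close> \<open>t < 1\<close>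
      by (intro add_mono mult_left_mono) auto
    finally show "((1 - t) *\<^sub>R a + t *\<^sub>R b) * z - r \<le> (1 - t) * sstar a x + t * sstar b x" .
  qed
qed auto

lemma subdiff_sconj_iff:
  "x \<in> \<Omega> \<Longrightarrow> z \<in> subdiff_sconj s b x \<longleftrightarrow> (\<forall>q. sstar b x + z * (q - b) \<le> sstar q x)"
  unfolding subdiff_sconj_def by (simp add: sconj_eq_sstar)

lemma subdiff_sconj_nonempty:
  assumes "x \<in> \<Omega>"
  shows "\<exists>z. z \<in> subdiff_sconj s b x"
proof -
  define f where "f q = sstar q x" for q
  have "convex_on UNIV f"
    unfolding f_def by (rule sstar_convex[OF assms])
  then have slope: "(f b - f q) / (b - q) \<le> (f t - f b) / (t - b)" if "q < b" "b < t" for q t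
    using convex_on_slope_le[of UNIV f q t b] that
    by (smt (verit, ccfv_SIG) UNIV_I minus_divide_divide)
  define S where "S = (\<lambda>t. (f t - f b) / (t - b)) ` {b<..}"
  have "S \<noteq> {}" and "bdd_below S"
    unfolding S_def bdd_below_def using slope[of "b - 1"] by force+
  define z where "z = Inf S"
  have "f b + z * (q - b) \<le> f q" for q
  proof (cases q b rule: linorder_cases)
    case less
    have "(f b - f q) / (b - q) \<le> z"
      unfolding z_def using \<open>S \<noteq> {}\<close> by (intro cInf_greatest) (auto simp: S_def intro: slope[OF less])
    with less show ?thesis
      by (simp add: divide_le_eq algebra_simps)
  next
    case greater
    have "z \<le> (f q - f b) / (q - b)"
      unfolding z_def using \<open>bdd_below S\<close> greater by (intro cInf_lower) (auto simp: S_def)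
    with greater show ?thesis
      by (simp add: le_divide_eq algebra_simps)
  qed simp
  then show ?thesis
    using subdiff_sconj_iff[OF assms] unfolding f_def by blast
qed

definition max_subgrad :: "real \<Rightarrow> 'a \<Rightarrow> ennreal" where
  "max_subgrad b x = e2ennreal (Sup (ereal ` subdiff_sconj s b x))"

lemma max_subgrad_mono:
  assumes "x \<in> \<Omega>" "b1 \<le> b2"
  shows "max_subgrad b1 x \<le> max_subgrad b2 x"
proof -
  obtain z2 where z2: "z2 \<in> subdiff_sconj s b2 x"
    using subdiff_sconj_nonempty[OF assms(1)] by blast
  have "ereal z1 \<le> Sup (ereal ` subdiff_sconj s b2 x)" if z1: "z1 \<in> subdiff_sconj s b1 x" for z1
  proof (cases "b1 = b2")
    case False
    have "sstar b1 x + z1 * (b2 - b1) \<le> sstar b2 x" "sstar b2 x + z2 * (b1 - b2) \<le> sstar b1 x"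
      using z1 z2 subdiff_sconj_iff[OF assms(1)] by blast+
    then have "z1 * (b2 - b1) \<le> z2 * (b2 - b1)"
      by (simp add: algebra_simps)
    with False assms(2) have "z1 \<le> z2"
      by (simp add: mult_le_cancel_right)
    with z2 show ?thesis
      by (meson Sup_upper2 ereal_less_eq(3) image_eqI)
  qed (use z1 in \<open>simp add: Sup_upper\<close>)
  then show ?thesis
    unfolding max_subgrad_def by (intro e2ennreal_mono Sup_least) blast
qed

lemma max_subgrad_le_slope:
  assumes "x \<in> \<Omega>" "b \<le> t"
  shows "ennreal (t - b) * max_subgrad b x \<le> ennreal (sstar t x)"
proof (cases "b = t")
  case False
  with assms(2) have "b < t" by simp
  define D where "D = (sstar t x - sstar b x) / (t - b)"
  have "Sup (ereal ` subdiff_sconj s b x) \<le> ereal D"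
  proof (rule Sup_least)
    fix y assume "y \<in> ereal ` subdiff_sconj s b x"
    then obtain z where z: "z \<in> subdiff_sconj s b x" and y: "y = ereal z" by blast
    have "sstar b x + z * (t - b) \<le> sstar t x"
      using z subdiff_sconj_iff[OF assms(1)] by blast
    with \<open>b < t\<close> show "y \<le> ereal D"
      unfolding D_def y by (simp add: le_divide_eq algebra_simps)
  qed
  then have "ennreal (t - b) * max_subgrad b x \<le> ennreal (t - b) * ennreal D"
    unfolding max_subgrad_def by (metis e2ennreal_ereal e2ennreal_mono mult_left_mono zero_le)
  also have "\<dots> \<le> ennreal (sstar t x)"
  proof (cases "D \<ge> 0")
    case True
    then have "ennreal (t - b) * ennreal D = ennreal (sstar t x - sstar b x)"
      using \<open>b < t\<close> by (simp add: D_def ennreal_mult[symmetric])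
    then show ?thesis
      using sstar_nonneg[OF assms(1), of b] by (simp add: ennreal_leI)
  qed (simp add: ennreal_neg)
  finally show ?thesis .
qed simp


definition bounded_by :: "('a \<Rightarrow> real) \<Rightarrow> real \<Rightarrow> bool" where
  "bounded_by P B \<longleftrightarrow> (\<forall>x\<in>\<Omega>. \<bar>P x\<bar> \<le> B)"

lemma bounded_byD: "bounded_by P B \<Longrightarrow> x \<in> \<Omega> \<Longrightarrow> \<bar>P x\<bar> \<le> B"
  unfolding bounded_by_def by blast

lemma bounded_by_mono: "bounded_by P B \<Longrightarrow> B \<le> B' \<Longrightarrow> bounded_by P B'"
  unfolding bounded_by_def by force

lemma bounded_by_max: "bounded_by P B \<Longrightarrow> bounded_by Q B \<Longrightarrow> bounded_by (\<lambda>x. max (P x) (Q x)) B"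
  and bounded_by_min: "bounded_by P B \<Longrightarrow> bounded_by Q B \<Longrightarrow> bounded_by (\<lambda>x. min (P x) (Q x)) B"
  unfolding bounded_by_def by (force simp: abs_le_iff)+

definition rctrans :: "('a \<Rightarrow> real) \<Rightarrow> 'a \<Rightarrow> real" where
  "rctrans P y = real_of_ereal (ctrans \<Omega> c (\<lambda>x. ereal (P x)) y)"

definition rctrans_bar :: "('a \<Rightarrow> real) \<Rightarrow> 'a \<Rightarrow> real" where
  "rctrans_bar Q x = real_of_ereal (ctrans_bar \<Omega> c (\<lambda>y. ereal (Q y)) x)"

lemma ctrans_eq_rctrans:
  assumes "bounded_by P B" "y \<in> \<Omega>"
  shows "ctrans \<Omega> c (\<lambda>x. ereal (P x)) y = ereal (rctrans P y)" "\<bar>rctrans P y\<bar> \<le> B"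
proof -
  let ?E = "ctrans \<Omega> c (\<lambda>x. ereal (P x)) y"
  have "?E \<le> ereal (P y)"
    unfolding ctrans_def using assms(2) c_diag[of y] by (intro INF_lower2[OF assms(2)]) auto
  moreover have "ereal (- B) \<le> ?E"
    unfolding ctrans_def using bounded_byD[OF assms(1)] c_nonneg
    by (intro INF_greatest) (smt (verit) abs_le_iff ereal_less_eq(3) plus_ereal.simps(1))
  ultimately obtain r where "?E = ereal r" "- B \<le> r" "r \<le> P y"
    by (cases ?E) auto
  then show "?E = ereal (rctrans P y)" "\<bar>rctrans P y\<bar> \<le> B"
    unfolding rctrans_def using bounded_byD[OF assms] by auto
qed

lemma ctrans_bar_eq_rctrans_bar:
  assumes "bounded_by Q B" "x \<in> \<Omega>"
  shows "ctrans_bar \<Omega> c (\<lambda>y. ereal (Q y)) x = ereal (rctrans_bar Q x)" "\<bar>rctrans_bar Q x\<bar> \<le> B"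
proof -
  let ?E = "ctrans_bar \<Omega> c (\<lambda>y. ereal (Q y)) x"
  have "ereal (Q x) \<le> ?E"
    unfolding ctrans_bar_def using assms(2) c_diag[of x] by (intro SUP_upper2[OF assms(2)]) auto
  moreover have "?E \<le> ereal B"
    unfolding ctrans_bar_def using bounded_byD[OF assms(1)] c_nonneg
    by (intro SUP_least) (smt (verit) abs_le_iff ereal_less_eq(3) ereal_minus(1))
  ultimately obtain r where "?E = ereal r" "Q x \<le> r" "r \<le> B"
    by (cases ?E) auto
  then show "?E = ereal (rctrans_bar Q x)" "\<bar>rctrans_bar Q x\<bar> \<le> B"
    unfolding rctrans_bar_def using bounded_byD[OF assms] by auto
qed

lemma bounded_by_rctrans: "bounded_by P B \<Longrightarrow> bounded_by (rctrans P) B"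
  and bounded_by_rctrans_bar: "bounded_by Q B \<Longrightarrow> bounded_by (rctrans_bar Q) B"
  using ctrans_eq_rctrans(2) ctrans_bar_eq_rctrans_bar(2) by (auto simp: bounded_by_def)

lemma rctrans_le: "bounded_by P B \<Longrightarrow> x \<in> \<Omega> \<Longrightarrow> y \<in> \<Omega> \<Longrightarrow> rctrans P y \<le> P x + c x y"
  using INF_lower[of x \<Omega> "\<lambda>x. ereal (P x) + ereal (c x y)"] ctrans_eq_rctrans(1)[of P B y]
  by (simp add: ctrans_def)

lemma rctrans_greatest:
  "bounded_by P B \<Longrightarrow> y \<in> \<Omega> \<Longrightarrow> (\<And>x. x \<in> \<Omega> \<Longrightarrow> L \<le> P x + c x y) \<Longrightarrow> L \<le> rctrans P y"
  using INF_greatest[of \<Omega> "ereal L" "\<lambda>x. ereal (P x) + ereal (c x y)"] ctrans_eq_rctrans(1)[of P B y]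
  by (simp add: ctrans_def)

lemma rctrans_bar_ge: "bounded_by Q B \<Longrightarrow> x \<in> \<Omega> \<Longrightarrow> y \<in> \<Omega> \<Longrightarrow> Q y - c x y \<le> rctrans_bar Q x"
  using SUP_upper[of y \<Omega> "\<lambda>y. ereal (Q y) - ereal (c x y)"] ctrans_bar_eq_rctrans_bar(1)[of Q B x]
  by (simp add: ctrans_bar_def)

lemma rctrans_bar_least:
  "bounded_by Q B \<Longrightarrow> x \<in> \<Omega> \<Longrightarrow> (\<And>y. y \<in> \<Omega> \<Longrightarrow> Q y - c x y \<le> U) \<Longrightarrow> rctrans_bar Q x \<le> U"
  using SUP_least[of \<Omega> "\<lambda>y. ereal (Q y) - ereal (c x y)" "ereal U"] ctrans_bar_eq_rctrans_bar(1)[of Q B x]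
  by (simp add: ctrans_bar_def)

lemma rctrans_le_shift:
  assumes "bounded_by P B" "bounded_by Q B'" "\<And>x. x \<in> \<Omega> \<Longrightarrow> P x \<le> Q x + e" "y \<in> \<Omega>"
  shows "rctrans P y \<le> rctrans Q y + e"
proof -
  have "rctrans P y - e \<le> rctrans Q y"
  proof (rule rctrans_greatest[OF assms(2) assms(4)])
    fix x assume "x \<in> \<Omega>"
    with rctrans_le[OF assms(1) _ assms(4)] assms(3) show "rctrans P y - e \<le> Q x + c x y"
      by fastforce
  qed
  then show ?thesis by simp
qed

lemma rctrans_bar_le_shift:
  assumes "bounded_by Q B" "bounded_by Q' B'" "\<And>y. y \<in> \<Omega> \<Longrightarrow> Q y \<le> Q' y + e" "x \<in> \<Omega>"
  shows "rctrans_bar Q x \<le> rctrans_bar Q' x + e"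
proof (rule rctrans_bar_least[OF assms(1) assms(4)])
  fix y assume "y \<in> \<Omega>"
  with rctrans_bar_ge[OF assms(2) assms(4)] assms(3) show "Q y - c x y \<le> rctrans_bar Q' x + e"
    by fastforce
qed

lemma rctrans_bar_rctrans_le: "bounded_by P B \<Longrightarrow> x \<in> \<Omega> \<Longrightarrow> rctrans_bar (rctrans P) x \<le> P x"
  by (rule rctrans_bar_least[OF bounded_by_rctrans]) (auto dest: rctrans_le)

lemma rctrans_rctrans_bar_rctrans:
  assumes "bounded_by P B" "y \<in> \<Omega>"
  shows "rctrans (rctrans_bar (rctrans P)) y = rctrans P y"
proof (rule antisym)
  have bounded: "bounded_by (rctrans_bar (rctrans P)) B"
    using assms(1) by (intro bounded_by_rctrans_bar bounded_by_rctrans)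
  show "rctrans (rctrans_bar (rctrans P)) y \<le> rctrans P y"
    using rctrans_le_shift[OF bounded assms(1) _ assms(2), of 0] rctrans_bar_rctrans_le[OF assms(1)]
    by simp
  show "rctrans P y \<le> rctrans (rctrans_bar (rctrans P)) y"
    using rctrans_bar_ge[OF bounded_by_rctrans[OF assms(1)] _ assms(2)]
    by (intro rctrans_greatest[OF bounded assms(2)]) (simp add: diff_le_eq)
qed

lemma rctrans_bar_cong: "(\<And>y. y \<in> \<Omega> \<Longrightarrow> Q y = Q' y) \<Longrightarrow> rctrans_bar Q = rctrans_bar Q'"
  unfolding rctrans_bar_def ctrans_bar_def by (intro ext) (simp cong: SUP_cong)

definition rc_concave :: "('a \<Rightarrow> real) \<Rightarrow> bool" where
  "rc_concave P \<longleftrightarrow> (\<forall>x\<in>\<Omega>. rctrans_bar (rctrans P) x = P x)"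

lemma c_concave_iff_rc_concave:
  assumes "bounded_by P B"
  shows "c_concave \<Omega> c (\<lambda>x. ereal (P x)) \<longleftrightarrow> rc_concave P"
proof -
  have "ctrans_bar \<Omega> c (ctrans \<Omega> c (\<lambda>x. ereal (P x))) x = ereal (rctrans_bar (rctrans P) x)"
    if "x \<in> \<Omega>" for x
  proof -
    have "ctrans_bar \<Omega> c (ctrans \<Omega> c (\<lambda>x. ereal (P x))) x
        = ctrans_bar \<Omega> c (\<lambda>y. ereal (rctrans P y)) x"
      unfolding ctrans_bar_def using ctrans_eq_rctrans(1)[OF assms] by (simp cong: SUP_cong)
    also have "\<dots> = ereal (rctrans_bar (rctrans P) x)"
      by (rule ctrans_bar_eq_rctrans_bar(1)[OF bounded_by_rctrans[OF assms] that])
    finally show ?thesis .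
  qed
  then show ?thesis
    unfolding c_concave_def rc_concave_def by simp
qed

lemma rc_concave_rctrans_bar: "bounded_by P B \<Longrightarrow> rc_concave (rctrans_bar (rctrans P))"
  unfolding rc_concave_def using rctrans_bar_cong[OF rctrans_rctrans_bar_rctrans] by simp

lemma rc_concave_max:
  assumes "rc_concave P1" "bounded_by P1 B" "rc_concave P2" "bounded_by P2 B"
  shows "rc_concave (\<lambda>x. max (P1 x) (P2 x))"
proof -
  let ?M = "\<lambda>x. max (P1 x) (P2 x)"
  have bounded: "bounded_by ?M B"
    using assms(2,4) by (rule bounded_by_max)
  have below: "P x \<le> rctrans_bar (rctrans ?M) x"
    if "rc_concave P" "bounded_by P B" "\<And>x. x \<in> \<Omega> \<Longrightarrow> P x \<le> ?M x" "x \<in> \<Omega>" for P x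
  proof -
    have "rctrans P y \<le> rctrans ?M y + 0" if "y \<in> \<Omega>" for y
      using \<open>\<And>x. x \<in> \<Omega> \<Longrightarrow> P x \<le> ?M x\<close> by (intro rctrans_le_shift[OF \<open>bounded_by P B\<close> bounded _ that]) simp
    then have "rctrans_bar (rctrans P) x \<le> rctrans_bar (rctrans ?M) x + 0"
      using bounded_by_rctrans[OF \<open>bounded_by P B\<close>] bounded_by_rctrans[OF bounded] \<open>x \<in> \<Omega>\<close>
      by (rule_tac rctrans_bar_le_shift) auto
    with \<open>rc_concave P\<close> \<open>x \<in> \<Omega>\<close> show ?thesis
      unfolding rc_concave_def by simp
  qed
  have "?M x = rctrans_bar (rctrans ?M) x" if "x \<in> \<Omega>" for x
    using below[OF assms(1,2) _ that] below[OF assms(3,4) _ that] rctrans_bar_rctrans_le[OF bounded that]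
    by simp
  then show ?thesis
    unfolding rc_concave_def by simp
qed

lemma rc_concave_uniform_limit:
  assumes "\<And>n. rc_concave (Pn n)" "\<And>n. bounded_by (Pn n) B" "bounded_by P B"
    and uniform: "\<And>e. e > 0 \<Longrightarrow> \<exists>n. \<forall>x\<in>\<Omega>. \<bar>Pn n x - P x\<bar> \<le> e"
  shows "rc_concave P"
  unfolding rc_concave_def
proof
  fix x assume "x \<in> \<Omega>"
  have approx: "\<bar>rctrans_bar (rctrans P) x - P x\<bar> \<le> 0 + 2 * e" if "e > 0" for e
  proof -
    obtain n where n: "\<And>x. x \<in> \<Omega> \<Longrightarrow> \<bar>Pn n x - P x\<bar> \<le> e"
      using uniform[OF \<open>e > 0\<close>] by blast
    have close: "P z \<le> Pn n z + e" "Pn n z \<le> P z + e" if "z \<in> \<Omega>" for z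
      using n[OF that] by linarith+
    have "rctrans P y \<le> rctrans (Pn n) y + e" if "y \<in> \<Omega>" for y
      using close(1) by (rule rctrans_le_shift[OF assms(3) assms(2) _ that])
    then have 1: "rctrans_bar (rctrans P) x \<le> rctrans_bar (rctrans (Pn n)) x + e"
      by (intro rctrans_bar_le_shift[OF bounded_by_rctrans[OF assms(3)] bounded_by_rctrans[OF assms(2)]
            _ \<open>x \<in> \<Omega>\<close>])
    have "rctrans (Pn n) y \<le> rctrans P y + e" if "y \<in> \<Omega>" for y
      using close(2) by (rule rctrans_le_shift[OF assms(2) assms(3) _ that])
    then have 2: "rctrans_bar (rctrans (Pn n)) x \<le> rctrans_bar (rctrans P) x + e"
      by (intro rctrans_bar_le_shift[OF bounded_by_rctrans[OF assms(2)] bounded_by_rctrans[OF assms(3)]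
            _ \<open>x \<in> \<Omega>\<close>])
    have "rctrans_bar (rctrans (Pn n)) x = Pn n x"
      using assms(1) \<open>x \<in> \<Omega>\<close> unfolding rc_concave_def by blast
    with 1 2 n[OF \<open>x \<in> \<Omega>\<close>] show ?thesis
      by linarith
  qed
  have "\<bar>rctrans_bar (rctrans P) x - P x\<bar> \<le> 0"
  proof (rule field_le_epsilon)
    fix e :: real assume "e > 0"
    then show "\<bar>rctrans_bar (rctrans P) x - P x\<bar> \<le> 0 + e"
      using approx[of "e / 2"] by simp
  qed
  then show "rctrans_bar (rctrans P) x = P x"
    by simp
qed


definition c_max :: real where
  "c_max = Sup ((\<lambda>(x, y). c x y) ` (\<Omega> \<times> \<Omega>))"

lemma c_le_c_max:
  assumes "x \<in> \<Omega>" "y \<in> \<Omega>"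
  shows "c x y \<le> c_max"
proof -
  have "compact ((\<lambda>(x, y). c x y) ` (closure \<Omega> \<times> closure \<Omega>))"
    using bounded_\<Omega> by (intro compact_continuous_image compact_Times continuous_on_subset[OF continuous_c])
      auto
  then have "bdd_above ((\<lambda>(x, y). c x y) ` (closure \<Omega> \<times> closure \<Omega>))"
    by (intro bounded_imp_bdd_above compact_imp_bounded)
  moreover have "(\<lambda>(x, y). c x y) ` (\<Omega> \<times> \<Omega>) \<subseteq> (\<lambda>(x, y). c x y) ` (closure \<Omega> \<times> closure \<Omega>)"
    using closure_subset by blast
  ultimately have "bdd_above ((\<lambda>(x, y). c x y) ` (\<Omega> \<times> \<Omega>))"
    by (rule bdd_above_mono)
  then show ?thesis
    unfolding c_max_def using assms by (intro cSup_upper) auto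
qed

lemma c_max_nonneg: "0 \<le> c_max"
  using \<Omega>_nonempty c_le_c_max c_nonneg by (meson ex_in_conv order_trans)

lemma c_uniform_modulus:
  assumes "e > 0"
  shows "\<exists>d>0. \<forall>x\<in>\<Omega>. \<forall>x'\<in>\<Omega>. \<forall>y\<in>\<Omega>. dist x x' < d \<longrightarrow>
           \<bar>c x y - c x' y\<bar> < e \<and> \<bar>c y x - c y x'\<bar> < e"
proof -
  let ?K = "closure \<Omega> \<times> closure \<Omega>"
  have "compact ?K"
    using bounded_\<Omega> by (intro compact_Times) auto
  then have "uniformly_continuous_on ?K (\<lambda>(x, y). c x y)"
    by (intro compact_uniformly_continuous continuous_on_subset[OF continuous_c]) auto
  then obtain d where "d > 0"
    and d: "\<And>u v. u \<in> ?K \<Longrightarrow> v \<in> ?K \<Longrightarrow> dist v u < d \<Longrightarrow>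
      dist ((\<lambda>(x, y). c x y) v) ((\<lambda>(x, y). c x y) u) < e"
    unfolding uniformly_continuous_on_def using assms by metis
  have "\<bar>c x y - c x' y\<bar> < e \<and> \<bar>c y x - c y x'\<bar> < e"
    if "x \<in> \<Omega>" "x' \<in> \<Omega>" "y \<in> \<Omega>" "dist x x' < d" for x x' y
  proof -
    have "x \<in> closure \<Omega>" "x' \<in> closure \<Omega>" "y \<in> closure \<Omega>"
      using that closure_subset by auto
    moreover have "dist (x, y) (x', y) < d" "dist (y, x) (y, x') < d"
      using that by (simp_all add: dist_Pair_Pair)
    ultimately show ?thesis
      using d[of "(x', y)" "(x, y)"] d[of "(y, x')" "(y, x)"] by (auto simp: dist_real_def)
  qed
  with \<open>d > 0\<close> show ?thesis by blast
qed

lemma rctrans_bar_modulus: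
  assumes "e > 0"
  shows "\<exists>d>0. \<forall>Q B. \<forall>x\<in>\<Omega>. \<forall>x'\<in>\<Omega>. bounded_by Q B \<longrightarrow> dist x x' < d \<longrightarrow>
      \<bar>rctrans_bar Q x - rctrans_bar Q x'\<bar> \<le> e"
proof -
  obtain d where "d > 0" and d: "\<And>x x' y. x \<in> \<Omega> \<Longrightarrow> x' \<in> \<Omega> \<Longrightarrow> y \<in> \<Omega> \<Longrightarrow>
      dist x x' < d \<Longrightarrow> \<bar>c x y - c x' y\<bar> < e"
    using c_uniform_modulus[OF assms] by metis
  have one_side: "rctrans_bar Q x \<le> rctrans_bar Q x' + e"
    if "bounded_by Q B" "x \<in> \<Omega>" "x' \<in> \<Omega>" "dist x x' < d" for Q B x x'
  proof (rule rctrans_bar_least[OF that(1,2)])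
    fix y assume "y \<in> \<Omega>"
    with rctrans_bar_ge[OF that(1,3)] d[OF that(2,3) _ that(4)]
    show "Q y - c x y \<le> rctrans_bar Q x' + e"
      by fastforce
  qed
  have "\<bar>rctrans_bar Q x - rctrans_bar Q x'\<bar> \<le> e"
    if "x \<in> \<Omega>" "x' \<in> \<Omega>" "bounded_by Q B" "dist x x' < d" for Q B x x'
    using one_side[OF that(3,1,2,4)] one_side[OF that(3,2,1)] that(4) by (simp add: dist_commute)
  with \<open>d > 0\<close> show ?thesis by blast
qed

lemma rctrans_modulus:
  assumes "e > 0"
  shows "\<exists>d>0. \<forall>P B. \<forall>y\<in>\<Omega>. \<forall>y'\<in>\<Omega>. bounded_by P B \<longrightarrow> dist y y' < d \<longrightarrow>
      \<bar>rctrans P y - rctrans P y'\<bar> \<le> e"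
proof -
  obtain d where "d > 0" and d: "\<And>x y y'. y \<in> \<Omega> \<Longrightarrow> y' \<in> \<Omega> \<Longrightarrow> x \<in> \<Omega> \<Longrightarrow>
      dist y y' < d \<Longrightarrow> \<bar>c x y - c x y'\<bar> < e"
    using c_uniform_modulus[OF assms] by metis
  have one_side: "rctrans P y \<le> rctrans P y' + e"
    if "bounded_by P B" "y \<in> \<Omega>" "y' \<in> \<Omega>" "dist y y' < d" for P B y y'
  proof -
    have "rctrans P y - e \<le> rctrans P y'"
    proof (rule rctrans_greatest[OF that(1,3)])
      fix x assume "x \<in> \<Omega>"
      with rctrans_le[OF that(1) _ that(2)] d[OF that(2,3) _ that(4)]
      show "rctrans P y - e \<le> P x + c x y'"
        by fastforce
    qed
    then show ?thesis by simp
  qed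
  have "\<bar>rctrans P y - rctrans P y'\<bar> \<le> e"
    if "y \<in> \<Omega>" "y' \<in> \<Omega>" "bounded_by P B" "dist y y' < d" for P B y y'
    using one_side[OF that(3,1,2,4)] one_side[OF that(3,2,1)] that(4) by (simp add: dist_commute)
  with \<open>d > 0\<close> show ?thesis by blast
qed

lemma rc_concave_modulus:
  assumes "e > 0"
  shows "\<exists>d>0. \<forall>P B. \<forall>x\<in>\<Omega>. \<forall>x'\<in>\<Omega>. rc_concave P \<longrightarrow> bounded_by P B \<longrightarrow> dist x x' < d \<longrightarrow>
      \<bar>P x - P x'\<bar> \<le> e"
proof -
  obtain d where "d > 0" and d: "\<And>Q B x x'. x \<in> \<Omega> \<Longrightarrow> x' \<in> \<Omega> \<Longrightarrow> bounded_by Q B \<Longrightarrow>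
      dist x x' < d \<Longrightarrow> \<bar>rctrans_bar Q x - rctrans_bar Q x'\<bar> \<le> e"
    using rctrans_bar_modulus[OF assms] by blast
  have "\<bar>P x - P x'\<bar> \<le> e"
    if "rc_concave P" "bounded_by P B" "x \<in> \<Omega>" "x' \<in> \<Omega>" "dist x x' < d" for P B x x'
    using d[OF that(3,4) bounded_by_rctrans[OF that(2)] that(5)] that(1,3,4)
    unfolding rc_concave_def by simp
  with \<open>d > 0\<close> show ?thesis by blast
qed

lemma continuous_on_rctrans:
  assumes "bounded_by P B"
  shows "continuous_on \<Omega> (rctrans P)"
proof (rule continuous_on_if_modulus)
  fix e :: real assume "e > 0"
  then obtain d where "d > 0" "\<forall>P B. \<forall>y\<in>\<Omega>. \<forall>y'\<in>\<Omega>. bounded_by P B \<longrightarrow> dist y y' < d \<longrightarrow>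
      \<bar>rctrans P y - rctrans P y'\<bar> \<le> e"
    using rctrans_modulus by blast
  with assms show "\<exists>d>0. \<forall>y\<in>\<Omega>. \<forall>y'\<in>\<Omega>. dist y y' < d \<longrightarrow> \<bar>rctrans P y - rctrans P y'\<bar> \<le> e"
    by blast
qed

lemma continuous_on_rc_concave:
  assumes "rc_concave P" "bounded_by P B"
  shows "continuous_on \<Omega> P"
proof (rule continuous_on_if_modulus)
  fix e :: real assume "e > 0"
  then obtain d where "d > 0" "\<forall>P B. \<forall>x\<in>\<Omega>. \<forall>x'\<in>\<Omega>. rc_concave P \<longrightarrow> bounded_by P B \<longrightarrow>
      dist x x' < d \<longrightarrow> \<bar>P x - P x'\<bar> \<le> e"
    using rc_concave_modulus by blast
  with assms show "\<exists>d>0. \<forall>x\<in>\<Omega>. \<forall>x'\<in>\<Omega>. dist x x' < d \<longrightarrow> \<bar>P x - P x'\<bar> \<le> e"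
    by blast
qed

lemma rc_concave_oscillation:
  assumes "rc_concave P" "bounded_by P B" "x \<in> \<Omega>" "x' \<in> \<Omega>"
  shows "P x' \<le> P x + c_max"
proof -
  have "rctrans_bar (rctrans P) x' \<le> P x + c_max"
  proof (rule rctrans_bar_least[OF bounded_by_rctrans[OF assms(2)] assms(4)])
    fix y assume "y \<in> \<Omega>"
    with rctrans_le[OF assms(2) assms(3)] c_le_c_max[OF assms(3)] c_nonneg[of x' y]
    show "rctrans P y - c x' y \<le> P x + c_max"
      by fastforce
  qed
  with assms(1,4) show ?thesis
    unfolding rc_concave_def by simp
qed


abbreviation Leb :: "'a measure" where
  "Leb \<equiv> lebesgue_on \<Omega>"

definition vol :: real where
  "vol = measure lebesgue \<Omega>"

lemma lmeasurable_\<Omega>: "\<Omega> \<in> lmeasurable"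
  using bounded_\<Omega> open_\<Omega> by (rule lmeasurable_open)

lemma emeasure_Leb: "emeasure Leb \<Omega> = ennreal vol"
proof -
  have "emeasure Leb \<Omega> = emeasure lebesgue \<Omega>"
    using lmeasurable_\<Omega> by (subst emeasure_restrict_space) (auto simp: fmeasurable_def)
  also have "\<dots> = ennreal vol"
    unfolding vol_def using lmeasurable_\<Omega> by (simp add: emeasure_eq_measure2)
  finally show ?thesis .
qed

lemma measurable_if_continuous_on: "continuous_on \<Omega> f \<Longrightarrow> f \<in> borel_measurable Leb"
  using continuous_imp_measurable_on_sets_lebesgue lmeasurable_\<Omega> fmeasurableD by blast

lemma eintegral_eq_integral:
  assumes "integrable Leb f" "\<And>x. x \<in> \<Omega> \<Longrightarrow> F x = ereal (f x)"
  shows "eintegral \<Omega> F = ereal (integral\<^sup>L Leb f)"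
proof -
  have pos: "(\<integral>\<^sup>+x. e2ennreal (F x) \<partial>Leb) = (\<integral>\<^sup>+x. ennreal (f x) \<partial>Leb)"
    and neg: "(\<integral>\<^sup>+x. e2ennreal (- F x) \<partial>Leb) = (\<integral>\<^sup>+x. ennreal (- f x) \<partial>Leb)"
    by (intro nn_integral_cong; simp add: assms(2))+
  have finite: "(\<integral>\<^sup>+x. ennreal (f x) \<partial>Leb) \<noteq> \<infinity>" "(\<integral>\<^sup>+x. ennreal (- f x) \<partial>Leb) \<noteq> \<infinity>"
    using assms(1) by auto
  have "enn2ereal X = ereal (enn2real X)" if "X \<noteq> \<infinity>" for X :: ennreal
    using that by (cases X rule: ennreal_cases) auto
  with finite show ?thesis
    unfolding eintegral_def pos neg real_lebesgue_integral_def[OF assms(1)] by simp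
qed

lemma Estar_eq_nn_integral: "Estar \<Omega> s p = enn2ereal (\<integral>\<^sup>+x. e2ennreal (sconj s (p x) x) \<partial>Leb)"
proof -
  have "(\<integral>\<^sup>+x. e2ennreal (- sconj s (p x) x) \<partial>Leb) = (\<integral>\<^sup>+x. 0 \<partial>Leb)"
    using sconj_nonneg by (intro nn_integral_cong e2ennreal_neg) simp
  then show ?thesis
    unfolding Estar_def eintegral_def by (simp add: zero_ennreal.rep_eq)
qed

definition dual_energy :: "('a \<Rightarrow> real) \<Rightarrow> ennreal" where
  "dual_energy P = (\<integral>\<^sup>+x. ennreal (sstar (P x) x) \<partial>Leb)"

lemma Estar_eq_dual_energy: "Estar \<Omega> s (\<lambda>x. ereal (P x)) = enn2ereal (dual_energy P)"
  unfolding Estar_eq_nn_integral dual_energy_def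
  by (intro arg_cong[where f = enn2ereal] nn_integral_cong) (simp add: sconj_eq_sstar)

lemma dual_energy_finite:
  assumes "bounded_by P B"
  shows "dual_energy P < top"
proof -
  obtain K where K: "\<And>x b. x \<in> \<Omega> \<Longrightarrow> \<bar>b\<bar> \<le> B \<Longrightarrow> sstar b x \<le> K"
    using sstar_bounded[of B] by blast
  have "dual_energy P \<le> (\<integral>\<^sup>+x. ennreal K \<partial>Leb)"
    unfolding dual_energy_def using K bounded_byD[OF assms] by (intro nn_integral_mono ennreal_leI) simp
  also have "\<dots> = ennreal K * ennreal vol"
    by (simp add: emeasure_Leb)
  finally show ?thesis
    by (simp add: ennreal_mult_less_top top.not_eq_extremum le_less_trans)
qed

lemma dual_energy_mono: "(\<And>x. x \<in> \<Omega> \<Longrightarrow> P x \<le> Q x) \<Longrightarrow> dual_energy P \<le> dual_energy Q"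
  unfolding dual_energy_def by (intro nn_integral_mono ennreal_leI sstar_mono) auto

lemma \<rho>_nonneg: "AE x in Leb. 0 \<le> \<rho> x"
proof -
  define N where "N = {x\<in>space Leb. \<rho> x < 0}"
  have N: "N \<in> sets Leb"
    unfolding N_def using integrable_\<rho> by measurable
  have "top * emeasure Leb N = (\<integral>\<^sup>+x. top * indicator N x \<partial>Leb)"
    using N by (simp add: nn_integral_cmult_indicator)
  also have "\<dots> \<le> (\<integral>\<^sup>+x. e2ennreal (s (\<rho> x) x) \<partial>Leb)"
    using s_neg by (intro nn_integral_mono) (auto simp: N_def indicator_def)
  finally have "top * emeasure Leb N \<le> (\<integral>\<^sup>+x. e2ennreal (s (\<rho> x) x) \<partial>Leb)" .
  moreover have "(\<integral>\<^sup>+x. e2ennreal (s (\<rho> x) x) \<partial>Leb) \<noteq> top"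
  proof
    assume "(\<integral>\<^sup>+x. e2ennreal (s (\<rho> x) x) \<partial>Leb) = top"
    then have "Efun \<Omega> s \<rho> = \<infinity>"
      unfolding Efun_def eintegral_def by simp
    with Efun_\<rho> show False by simp
  qed
  ultimately have "emeasure Leb N = 0"
    by (metis ennreal_mult_eq_top_iff top.extremum_uniqueI)
  with N have "N \<in> null_sets Leb" by auto
  then show ?thesis
    by (rule AE_I') (auto simp: N_def)
qed

definition mass :: real where
  "mass = integral\<^sup>L Leb \<rho>"

lemma mass_pos: "0 < mass"
  using condN_\<rho> unfolding condN_def mass_def by simp

lemma integral_\<rho>_mono:
  assumes "integrable Leb (\<lambda>y. \<rho> y * u y)" "integrable Leb (\<lambda>y. \<rho> y * v y)"
    and "\<And>y. y \<in> \<Omega> \<Longrightarrow> u y \<le> v y"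
  shows "integral\<^sup>L Leb (\<lambda>y. \<rho> y * u y) \<le> integral\<^sup>L Leb (\<lambda>y. \<rho> y * v y)"
proof (rule integral_mono_AE[OF assms(1,2)])
  have "AE y in Leb. y \<in> \<Omega>"
    by (rule AE_I2) simp
  with \<rho>_nonneg show "AE y in Leb. \<rho> y * u y \<le> \<rho> y * v y"
    by eventually_elim (auto intro: mult_left_mono assms(3))
qed

lemma integrable_\<rho>_rctrans:
  assumes "bounded_by P B"
  shows "integrable Leb (\<lambda>y. \<rho> y * rctrans P y)"
proof (rule Bochner_Integration.integrable_bound)
  show "integrable Leb (\<lambda>y. B * \<rho> y)"
    using integrable_\<rho> by simp
  show "(\<lambda>y. \<rho> y * rctrans P y) \<in> borel_measurable Leb"
    using integrable_\<rho> measurable_if_continuous_on[OF continuous_on_rctrans[OF assms]] by measurable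
  have "\<bar>\<rho> y\<bar> * \<bar>rctrans P y\<bar> \<le> \<bar>\<rho> y\<bar> * B" if "y \<in> \<Omega>" for y
    using bounded_byD[OF bounded_by_rctrans[OF assms] that] by (intro mult_left_mono) auto
  moreover have "0 \<le> B"
    using bounded_byD[OF assms] \<Omega>_nonempty by fastforce
  ultimately show "AE y in Leb. norm (\<rho> y * rctrans P y) \<le> norm (B * \<rho> y)"
    by (intro AE_I2) (simp add: abs_mult mult.commute)
qed

definition Jr :: "('a \<Rightarrow> real) \<Rightarrow> real" where
  "Jr P = integral\<^sup>L Leb (\<lambda>y. \<rho> y * rctrans P y) - enn2real (dual_energy P)"

lemma Jstar_eq_Jr:
  assumes "bounded_by P B"
  shows "Jstar \<Omega> s c (\<lambda>x. ereal (P x)) \<rho> = ereal (Jr P)"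
proof -
  have "eintegral \<Omega> (\<lambda>y. ereal (\<rho> y) * ctrans \<Omega> c (\<lambda>x. ereal (P x)) y)
      = ereal (integral\<^sup>L Leb (\<lambda>y. \<rho> y * rctrans P y))"
    by (rule eintegral_eq_integral[OF integrable_\<rho>_rctrans[OF assms]])
      (simp add: ctrans_eq_rctrans(1)[OF assms])
  moreover have "enn2ereal (dual_energy P) = ereal (enn2real (dual_energy P))"
    using dual_energy_finite[OF assms] by (cases "dual_energy P" rule: ennreal_cases) auto
  ultimately show ?thesis
    unfolding Jstar_def Jr_def Estar_eq_dual_energy by simp
qed


section \<open>Coercivity from condition (N)\<close>

lemma condN_slope: "\<exists>b \<delta>. \<delta> > 0 \<and> ennreal (mass + \<delta>) \<le> (\<integral>\<^sup>+x. max_subgrad b x \<partial>Leb)"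
proof -
  define F where "F b = (\<integral>\<^sup>+x. max_subgrad b x \<partial>Leb)" for b
  have "mono F"
    unfolding F_def by (intro monoI nn_integral_mono) (auto intro: max_subgrad_mono)
  then have "(F \<longlongrightarrow> (SUP b. F b)) at_top"
    by (rule tendsto_at_top_SUP_mono)
  then have "Lim at_top F = (SUP b. F b)"
    by (intro tendsto_Lim) simp
  moreover have "ennreal mass < Lim at_top F"
    using condN_\<rho> unfolding condN_def mass_def F_def max_subgrad_def by simp
  ultimately obtain b where "ennreal mass < F b"
    by (auto simp: less_SUP_iff)
  then obtain y where y: "ennreal mass < y" "y < F b"
    using dense by blast
  then obtain r where r: "y = ennreal r" "0 \<le> r"
    by (cases y rule: ennreal_cases) auto
  with y mass_pos have "mass < r"
    by (simp add: ennreal_less_iff)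
  with y r show ?thesis
    unfolding F_def by (intro exI[of _ b] exI[of _ "r - mass"]) auto
qed

definition coercive_at :: "real \<Rightarrow> real \<Rightarrow> bool" where
  "coercive_at b \<delta> \<longleftrightarrow> \<delta> > 0 \<and>
     (\<forall>P t. b \<le> t \<longrightarrow> (\<forall>x\<in>\<Omega>. t \<le> P x) \<longrightarrow> ennreal ((t - b) * (mass + \<delta>)) \<le> dual_energy P)"

lemma ex_coercive_at: "\<exists>b \<delta>. coercive_at b \<delta>"
proof -
  obtain b \<delta> where "\<delta> > 0" and b: "ennreal (mass + \<delta>) \<le> (\<integral>\<^sup>+x. max_subgrad b x \<partial>Leb)"
    using condN_slope by blast
  have "ennreal ((t - b) * (mass + \<delta>)) \<le> dual_energy P" if "b \<le> t" "\<forall>x\<in>\<Omega>. t \<le> P x" for P t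
  proof -
    have "ennreal ((t - b) * (mass + \<delta>)) \<le> ennreal (t - b) * (\<integral>\<^sup>+x. max_subgrad b x \<partial>Leb)"
      using that mass_pos \<open>\<delta> > 0\<close> b by (simp add: ennreal_mult mult_left_mono)
    also have "\<dots> \<le> (\<integral>\<^sup>+x. ennreal (t - b) * max_subgrad b x \<partial>Leb)"
      by (rule nn_integral_cmult_le)
    also have "\<dots> \<le> dual_energy (\<lambda>_. t)"
      unfolding dual_energy_def using max_subgrad_le_slope that(1) by (intro nn_integral_mono) simp
    also have "\<dots> \<le> dual_energy P"
      using that(2) by (intro dual_energy_mono) auto
    finally show ?thesis .
  qed
  with \<open>\<delta> > 0\<close> show ?thesis
    unfolding coercive_at_def by blast
qed

definition b0 :: real where
  "b0 = (SOME b. \<exists>\<delta>. coercive_at b \<delta>)"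

definition \<delta>0 :: real where
  "\<delta>0 = (SOME \<delta>. coercive_at b0 \<delta>)"

lemma coercive_at_b0_\<delta>0: "coercive_at b0 \<delta>0"
proof -
  have "\<exists>\<delta>. coercive_at b0 \<delta>"
    unfolding b0_def using ex_coercive_at by (rule someI_ex)
  then show ?thesis
    unfolding \<delta>0_def by (rule someI_ex)
qed

lemma \<delta>0_pos: "\<delta>0 > 0"
  and dual_energy_coercive:
    "b0 \<le> t \<Longrightarrow> (\<And>x. x \<in> \<Omega> \<Longrightarrow> t \<le> P x) \<Longrightarrow> ennreal ((t - b0) * (mass + \<delta>0)) \<le> dual_energy P"
  using coercive_at_b0_\<delta>0 unfolding coercive_at_def by blast+

lemma Jr_bounds:
  assumes "rc_concave P" "bounded_by P B" "x0 \<in> \<Omega>"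
  defines "t \<equiv> P x0 - c_max"
  shows "\<And>x. x \<in> \<Omega> \<Longrightarrow> t \<le> P x \<and> P x \<le> t + 2 * c_max"
    and "Jr P \<le> (t + 2 * c_max) * mass"
    and "b0 \<le> t \<Longrightarrow> Jr P \<le> (t + 2 * c_max) * mass - (t - b0) * (mass + \<delta>0)"
proof -
  show range: "t \<le> P x \<and> P x \<le> t + 2 * c_max" if "x \<in> \<Omega>" for x
    using rc_concave_oscillation[OF assms(1,2) that assms(3)]
      rc_concave_oscillation[OF assms(1,2) assms(3) that]
    unfolding t_def by simp
  have "rctrans P y \<le> t + 2 * c_max" if "y \<in> \<Omega>" for y
    using rctrans_le[OF assms(2) that that] c_diag[of y] range[OF that] by simp
  then have "integral\<^sup>L Leb (\<lambda>y. \<rho> y * rctrans P y) \<le> integral\<^sup>L Leb (\<lambda>y. \<rho> y * (t + 2 * c_max))"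
    using integrable_\<rho> by (intro integral_\<rho>_mono integrable_\<rho>_rctrans[OF assms(2)]) auto
  then have integral: "integral\<^sup>L Leb (\<lambda>y. \<rho> y * rctrans P y) \<le> (t + 2 * c_max) * mass"
    unfolding mass_def by (simp add: mult.commute)
  then show "Jr P \<le> (t + 2 * c_max) * mass"
    unfolding Jr_def using enn2real_nonneg[of "dual_energy P"] by linarith
  assume "b0 \<le> t"
  then have "ennreal ((t - b0) * (mass + \<delta>0)) \<le> dual_energy P"
    using range by (intro dual_energy_coercive) auto
  then have "(t - b0) * (mass + \<delta>0) \<le> enn2real (dual_energy P)"
    using dual_energy_finite[OF assms(2)] \<open>b0 \<le> t\<close> mass_pos \<delta>0_pos
    by (metis enn2real_ennreal enn2real_mono less_imp_le add_pos_pos diff_ge_0_iff_ge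
        mult_nonneg_nonneg)
  with integral show "Jr P \<le> (t + 2 * c_max) * mass - (t - b0) * (mass + \<delta>0)"
    unfolding Jr_def by simp
qed

definition J_bound :: real where
  "J_bound = (b0 + 2 * c_max) * mass"

lemma Jr_le_J_bound:
  assumes "rc_concave P" "bounded_by P B"
  shows "Jr P \<le> J_bound"
proof -
  obtain x0 where "x0 \<in> \<Omega>"
    using \<Omega>_nonempty by blast
  define t where "t = P x0 - c_max"
  show ?thesis
  proof (cases "b0 \<le> t")
    case True
    have "Jr P \<le> (t + 2 * c_max) * mass - (t - b0) * (mass + \<delta>0)"
      using Jr_bounds(3)[OF assms \<open>x0 \<in> \<Omega>\<close>] True t_def by simp
    also have "\<dots> = J_bound - (t - b0) * \<delta>0"
      unfolding J_bound_def by (simp add: algebra_simps)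
    also have "\<dots> \<le> J_bound"
      using True \<delta>0_pos by simp
    finally show ?thesis .
  next
    case False
    have "Jr P \<le> (t + 2 * c_max) * mass"
      using Jr_bounds(2)[OF assms \<open>x0 \<in> \<Omega>\<close>] t_def by simp
    also have "\<dots> \<le> J_bound"
      unfolding J_bound_def using False mass_pos by (intro mult_right_mono) auto
    finally show ?thesis .
  qed
qed

definition level_bound :: "real \<Rightarrow> real" where
  "level_bound L = \<bar>L / mass - 2 * c_max\<bar> + \<bar>b0 + \<bar>J_bound - L\<bar> / \<delta>0\<bar> + 2 * c_max"

lemma bounded_by_level_bound:
  assumes "rc_concave P" "bounded_by P B" "L \<le> Jr P"
  shows "bounded_by P (level_bound L)"
proof -
  obtain x0 where "x0 \<in> \<Omega>"
    using \<Omega>_nonempty by blast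
  define t where "t = P x0 - c_max"
  have "L \<le> (t + 2 * c_max) * mass"
    using Jr_bounds(2)[OF assms(1,2) \<open>x0 \<in> \<Omega>\<close>] assms(3) t_def by simp
  then have "L / mass \<le> t + 2 * c_max"
    using mass_pos by (simp add: divide_le_eq)
  then have lower: "L / mass - 2 * c_max \<le> t"
    by simp
  have upper: "t \<le> b0 + \<bar>J_bound - L\<bar> / \<delta>0"
  proof (cases "b0 \<le> t")
    case True
    have "L \<le> (t + 2 * c_max) * mass - (t - b0) * (mass + \<delta>0)"
      using Jr_bounds(3)[OF assms(1,2) \<open>x0 \<in> \<Omega>\<close>] True assms(3) t_def by simp
    also have "\<dots> = J_bound - (t - b0) * \<delta>0"
      unfolding J_bound_def by (simp add: algebra_simps)
    finally have "t - b0 \<le> (J_bound - L) / \<delta>0"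
      using \<delta>0_pos by (simp add: le_divide_eq mult.commute)
    also have "\<dots> \<le> \<bar>J_bound - L\<bar> / \<delta>0"
      using \<delta>0_pos by (simp add: divide_right_mono)
    finally show ?thesis by simp
  next
    case False
    with \<delta>0_pos show ?thesis
      by (smt (verit) divide_nonneg_pos abs_ge_zero)
  qed
  have "t \<le> P x \<and> P x \<le> t + 2 * c_max" if "x \<in> \<Omega>" for x
    using Jr_bounds(1)[OF assms(1,2) \<open>x0 \<in> \<Omega>\<close> that] t_def by simp
  with lower upper c_max_nonneg show ?thesis
    unfolding bounded_by_def level_bound_def by fastforce
qed


lemma integral_\<rho>_rctrans_shift:
  assumes "bounded_by P B" "bounded_by Q B'" "\<And>x. x \<in> \<Omega> \<Longrightarrow> Q x \<le> P x + e"
  shows "integral\<^sup>L Leb (\<lambda>y. \<rho> y * rctrans Q y) \<le> integral\<^sup>L Leb (\<lambda>y. \<rho> y * rctrans P y) + e * mass"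
proof -
  have integrable: "integrable Leb (\<lambda>y. \<rho> y * rctrans P y + \<rho> y * e)"
    using integrable_\<rho>_rctrans[OF assms(1)] integrable_\<rho> by simp
  have "integral\<^sup>L Leb (\<lambda>y. \<rho> y * rctrans Q y) \<le> integral\<^sup>L Leb (\<lambda>y. \<rho> y * (rctrans P y + e))"
    using integrable rctrans_le_shift[OF assms(2,1,3)]
    by (intro integral_\<rho>_mono integrable_\<rho>_rctrans[OF assms(2)]) (simp_all add: distrib_left)
  also have "\<dots> = integral\<^sup>L Leb (\<lambda>y. \<rho> y * rctrans P y) + e * mass"
    using integrable_\<rho>_rctrans[OF assms(1)] integrable_\<rho>
    by (simp add: distrib_left mass_def mult.commute)
  finally show ?thesis .
qed

lemma dual_energy_shift:
  "\<exists>Z\<ge>0. \<forall>P Q e. bounded_by P B \<longrightarrow> bounded_by Q B \<longrightarrow> 0 \<le> e \<longrightarrow> (\<forall>x\<in>\<Omega>. P x \<le> Q x + e) \<longrightarrow>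
     enn2real (dual_energy P) \<le> enn2real (dual_energy Q) + e * Z * vol"
proof -
  obtain Z where "Z > 0" and Z: "\<And>x b b' e. x \<in> \<Omega> \<Longrightarrow> \<bar>b\<bar> \<le> B \<Longrightarrow> 0 \<le> e \<Longrightarrow> b \<le> b' + e \<Longrightarrow>
      sstar b x \<le> sstar b' x + e * Z"
    using sstar_le_shift[of B] by blast
  have "enn2real (dual_energy P) \<le> enn2real (dual_energy Q) + e * Z * vol"
    if "bounded_by P B" "bounded_by Q B" "0 \<le> e" "\<forall>x\<in>\<Omega>. P x \<le> Q x + e" for P Q e
  proof -
    have "ennreal (sstar (P x) x) \<le> ennreal (sstar (Q x) x) + ennreal (e * Z)" if "x \<in> \<Omega>" for x
      using Z[OF that bounded_byD[OF \<open>bounded_by P B\<close> that] \<open>0 \<le> e\<close>] \<open>\<forall>x\<in>\<Omega>. P x \<le> Q x + e\<close> that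
        sstar_nonneg[OF that] \<open>0 \<le> e\<close> \<open>Z > 0\<close>
      by (simp add: ennreal_plus[symmetric] del: ennreal_plus)
    then have "dual_energy P \<le> dual_energy Q + ennreal (e * Z) * emeasure Leb (space Leb)"
      unfolding dual_energy_def by (intro nn_integral_le_add_const) auto
    also have "\<dots> = dual_energy Q + ennreal (e * Z * vol)"
      using \<open>0 \<le> e\<close> \<open>Z > 0\<close> by (simp add: emeasure_Leb ennreal_mult vol_def)
    finally have "enn2real (dual_energy P) \<le> enn2real (dual_energy Q + ennreal (e * Z * vol))"
      using dual_energy_finite[OF \<open>bounded_by Q B\<close>] by (intro enn2real_mono) auto
    also have "\<dots> = enn2real (dual_energy Q) + e * Z * vol"
      using dual_energy_finite[OF \<open>bounded_by Q B\<close>] \<open>0 \<le> e\<close> \<open>Z > 0\<close>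
      by (subst enn2real_plus) (auto simp: vol_def)
    finally show ?thesis .
  qed
  with \<open>Z > 0\<close> show ?thesis
    by (intro exI[of _ Z]) auto
qed

lemma Jr_lipschitz:
  "\<exists>K\<ge>0. \<forall>P Q e. bounded_by P B \<longrightarrow> bounded_by Q B \<longrightarrow> 0 \<le> e \<longrightarrow> (\<forall>x\<in>\<Omega>. \<bar>P x - Q x\<bar> \<le> e) \<longrightarrow>
     Jr Q \<le> Jr P + e * K"
proof -
  obtain Z where "Z \<ge> 0" and Z: "\<And>P Q e. bounded_by P B \<Longrightarrow> bounded_by Q B \<Longrightarrow> 0 \<le> e \<Longrightarrow>
      (\<forall>x\<in>\<Omega>. P x \<le> Q x + e) \<Longrightarrow> enn2real (dual_energy P) \<le> enn2real (dual_energy Q) + e * Z * vol"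
    using dual_energy_shift[of B] by blast
  have "Jr Q \<le> Jr P + e * (mass + Z * vol)"
    if "bounded_by P B" "bounded_by Q B" "0 \<le> e" "\<forall>x\<in>\<Omega>. \<bar>P x - Q x\<bar> \<le> e" for P Q e
  proof -
    have "integral\<^sup>L Leb (\<lambda>y. \<rho> y * rctrans Q y) \<le> integral\<^sup>L Leb (\<lambda>y. \<rho> y * rctrans P y) + e * mass"
      using that by (intro integral_\<rho>_rctrans_shift) (auto simp: abs_le_iff)
    moreover have "enn2real (dual_energy P) \<le> enn2real (dual_energy Q) + e * Z * vol"
      using that by (intro Z) (auto simp: abs_le_iff)
    ultimately show ?thesis
      unfolding Jr_def by (simp add: algebra_simps)
  qed
  moreover have "0 \<le> mass + Z * vol"
    using mass_pos \<open>Z \<ge> 0\<close> by (simp add: vol_def)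
  ultimately show ?thesis by blast
qed

lemma Jr_uniform_limit_ge:
  assumes "\<And>n. bounded_by (Pn n) B" "bounded_by P B"
    and uniform: "\<And>e. e > 0 \<Longrightarrow> \<exists>n. \<forall>x\<in>\<Omega>. \<bar>Pn n x - P x\<bar> \<le> e"
    and "\<And>n. L \<le> Jr (Pn n)"
  shows "L \<le> Jr P"
proof (rule field_le_epsilon)
  obtain K where "K \<ge> 0" and K: "\<And>P Q e. bounded_by P B \<Longrightarrow> bounded_by Q B \<Longrightarrow> 0 \<le> e \<Longrightarrow>
      (\<forall>x\<in>\<Omega>. \<bar>P x - Q x\<bar> \<le> e) \<Longrightarrow> Jr Q \<le> Jr P + e * K"
    using Jr_lipschitz[of B] by blast
  fix e :: real assume "e > 0"
  then obtain n where n: "\<forall>x\<in>\<Omega>. \<bar>Pn n x - P x\<bar> \<le> e / (K + 1)"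
    using uniform[of "e / (K + 1)"] \<open>K \<ge> 0\<close> by auto
  then have "Jr (Pn n) \<le> Jr P + e / (K + 1) * K"
    using \<open>e > 0\<close> \<open>K \<ge> 0\<close> by (intro K[OF assms(2,1)]) (auto simp: abs_minus_commute)
  also have "e / (K + 1) * K \<le> e"
    using \<open>e > 0\<close> \<open>K \<ge> 0\<close> by (simp add: field_simps)
  finally show "L \<le> Jr P + e"
    using assms(4)[of n] by linarith
qed

lemma rctrans_max_min:
  assumes "bounded_by P1 B" "bounded_by P2 B" "y \<in> \<Omega>"
  shows "rctrans P1 y + rctrans P2 y \<le>
    rctrans (\<lambda>x. max (P1 x) (P2 x)) y + rctrans (rctrans_bar (rctrans (\<lambda>x. min (P1 x) (P2 x)))) y"
proof -
  let ?Mx = "\<lambda>x. max (P1 x) (P2 x)" and ?Mn = "\<lambda>x. min (P1 x) (P2 x)"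
  have "rctrans P1 y \<le> rctrans ?Mx y + 0"
    by (rule rctrans_le_shift[OF assms(1) bounded_by_max[OF assms(1,2)] _ assms(3)]) simp
  moreover have "rctrans P2 y \<le> rctrans ?Mx y + 0"
    by (rule rctrans_le_shift[OF assms(2) bounded_by_max[OF assms(1,2)] _ assms(3)]) simp
  moreover have "min (rctrans P1 y) (rctrans P2 y) \<le> rctrans ?Mn y"
  proof (rule rctrans_greatest[OF bounded_by_min[OF assms(1,2)] assms(3)])
    fix x assume x: "x \<in> \<Omega>"
    with rctrans_le[OF assms(1) x assms(3)] rctrans_le[OF assms(2) x assms(3)]
    show "min (rctrans P1 y) (rctrans P2 y) \<le> min (P1 x) (P2 x) + c x y"
      by (simp add: min_def)
  qed
  moreover have "rctrans (rctrans_bar (rctrans ?Mn)) y = rctrans ?Mn y"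
    using bounded_by_min[OF assms(1,2)] assms(3) by (rule rctrans_rctrans_bar_rctrans)
  ultimately show ?thesis by linarith
qed

lemma dual_energy_max_min:
  assumes "P1 \<in> borel_measurable Leb" "P2 \<in> borel_measurable Leb"
  shows "dual_energy (\<lambda>x. max (P1 x) (P2 x)) + dual_energy (\<lambda>x. min (P1 x) (P2 x))
    = dual_energy P1 + dual_energy P2"
proof -
  define U where "U = {x\<in>\<Omega>. P1 x \<le> P2 x}"
  have "{x\<in>space Leb. P1 x \<le> P2 x} \<in> sets Leb"
    using assms by measurable
  then have U: "U \<in> sets Leb"
    unfolding U_def by simp
  define part where "part Q V = (\<integral>\<^sup>+x. ennreal (sstar (Q x) x) * indicator V x \<partial>Leb)" for Q V
  have split: "dual_energy Q = part Q U + part Q (\<Omega> - U)" for Q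
    unfolding dual_energy_def part_def
    using nn_integral_split_indicator[OF U, of "\<lambda>x. ennreal (sstar (Q x) x)"] by simp
  have "part (\<lambda>x. max (P1 x) (P2 x)) U = part P2 U"
    unfolding part_def by (intro nn_integral_cong) (simp add: U_def indicator_def)
  moreover have "part (\<lambda>x. max (P1 x) (P2 x)) (\<Omega> - U) = part P1 (\<Omega> - U)"
    unfolding part_def by (intro nn_integral_cong) (simp add: U_def indicator_def)
  moreover have "part (\<lambda>x. min (P1 x) (P2 x)) U = part P1 U"
    unfolding part_def by (intro nn_integral_cong) (simp add: U_def indicator_def)
  moreover have "part (\<lambda>x. min (P1 x) (P2 x)) (\<Omega> - U) = part P2 (\<Omega> - U)"
    unfolding part_def by (intro nn_integral_cong) (simp add: U_def indicator_def)
  ultimately show ?thesis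
    unfolding split by (simp add: ac_simps)
qed

lemma Jr_supermodular:
  assumes "rc_concave P1" "bounded_by P1 B" "rc_concave P2" "bounded_by P2 B"
  shows "Jr P1 + Jr P2 \<le>
    Jr (\<lambda>x. max (P1 x) (P2 x)) + Jr (rctrans_bar (rctrans (\<lambda>x. min (P1 x) (P2 x))))"
proof -
  let ?Mx = "\<lambda>x. max (P1 x) (P2 x)" and ?Mn = "\<lambda>x. min (P1 x) (P2 x)"
  have bounded: "bounded_by ?Mx B" "bounded_by ?Mn B" "bounded_by (rctrans_bar (rctrans ?Mn)) B"
    using assms(2,4) by (auto intro: bounded_by_max bounded_by_min bounded_by_rctrans_bar bounded_by_rctrans)
  note integrable = integrable_\<rho>_rctrans[OF assms(2)] integrable_\<rho>_rctrans[OF assms(4)]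
    integrable_\<rho>_rctrans[OF bounded(1)] integrable_\<rho>_rctrans[OF bounded(3)]
  have "integral\<^sup>L Leb (\<lambda>y. \<rho> y * (rctrans P1 y + rctrans P2 y))
      \<le> integral\<^sup>L Leb (\<lambda>y. \<rho> y * (rctrans ?Mx y + rctrans (rctrans_bar (rctrans ?Mn)) y))"
    using integrable rctrans_max_min[OF assms(2,4)] by (intro integral_\<rho>_mono) (simp_all add: distrib_left)
  then have integral: "integral\<^sup>L Leb (\<lambda>y. \<rho> y * rctrans P1 y) + integral\<^sup>L Leb (\<lambda>y. \<rho> y * rctrans P2 y)
      \<le> integral\<^sup>L Leb (\<lambda>y. \<rho> y * rctrans ?Mx y)
        + integral\<^sup>L Leb (\<lambda>y. \<rho> y * rctrans (rctrans_bar (rctrans ?Mn)) y)"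
    using integrable by (simp add: distrib_left)
  have split: "dual_energy ?Mx + dual_energy ?Mn = dual_energy P1 + dual_energy P2"
    using assms by (intro dual_energy_max_min measurable_if_continuous_on continuous_on_rc_concave)
  have "dual_energy (rctrans_bar (rctrans ?Mn)) \<le> dual_energy ?Mn"
    using bounded(2) by (intro dual_energy_mono rctrans_bar_rctrans_le)
  then have "enn2real (dual_energy ?Mx) + enn2real (dual_energy (rctrans_bar (rctrans ?Mn)))
      \<le> enn2real (dual_energy ?Mx) + enn2real (dual_energy ?Mn)"
    using dual_energy_finite[OF bounded(2)] by (simp add: enn2real_mono)
  also have "\<dots> = enn2real (dual_energy P1 + dual_energy P2)"
    using dual_energy_finite[OF bounded(1)] dual_energy_finite[OF bounded(2)]
    by (simp add: enn2real_plus split[symmetric])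
  also have "\<dots> = enn2real (dual_energy P1) + enn2real (dual_energy P2)"
    using dual_energy_finite[OF assms(2)] dual_energy_finite[OF assms(4)] by (simp add: enn2real_plus)
  finally have "enn2real (dual_energy ?Mx) + enn2real (dual_energy (rctrans_bar (rctrans ?Mn)))
      \<le> enn2real (dual_energy P1) + enn2real (dual_energy P2)" .
  with integral show ?thesis
    unfolding Jr_def by linarith
qed


lemma rc_concave_limit:
  assumes "\<And>n. rc_concave (Pn n)" "\<And>n. bounded_by (Pn n) B"
    and lim: "\<And>x. x \<in> \<Omega> \<Longrightarrow> (\<lambda>n. Pn n x) \<longlonglongrightarrow> P x"
    and "\<And>n. L \<le> Jr (Pn n)"
  shows "rc_concave P" "bounded_by P B" "L \<le> Jr P"
proof -
  show bounded: "bounded_by P B"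
    unfolding bounded_by_def
  proof
    fix x assume "x \<in> \<Omega>"
    have "(\<lambda>n. \<bar>Pn n x\<bar>) \<longlonglongrightarrow> \<bar>P x\<bar>"
      using lim[OF \<open>x \<in> \<Omega>\<close>] by (rule tendsto_rabs)
    then show "\<bar>P x\<bar> \<le> B"
      using bounded_byD[OF assms(2) \<open>x \<in> \<Omega>\<close>] by (intro LIMSEQ_le_const2) auto
  qed
  have modulus: "\<exists>d>0. \<forall>n. \<forall>x\<in>\<Omega>. \<forall>x'\<in>\<Omega>. dist x x' < d \<longrightarrow> \<bar>Pn n x - Pn n x'\<bar> \<le> e"
    if "e > 0" for e
  proof -
    obtain d where "d > 0" "\<forall>P B. \<forall>x\<in>\<Omega>. \<forall>x'\<in>\<Omega>. rc_concave P \<longrightarrow> bounded_by P B \<longrightarrow>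
        dist x x' < d \<longrightarrow> \<bar>P x - P x'\<bar> \<le> e"
      using rc_concave_modulus[OF \<open>e > 0\<close>] by blast
    with assms(1,2) show ?thesis by blast
  qed
  have uniform: "\<exists>n. \<forall>x\<in>\<Omega>. \<bar>Pn n x - P x\<bar> \<le> e" if "e > 0" for e
    using equicontinuous_imp_uniform_limit[OF bounded_\<Omega> modulus lim that] by blast
  show "rc_concave P"
    using assms(1,2) bounded uniform by (rule rc_concave_uniform_limit)
  show "L \<le> Jr P"
    using assms(2) bounded uniform assms(4) by (rule Jr_uniform_limit_ge)
qed

lemma incseq_rc_concave_limit:
  assumes "\<And>n. rc_concave (Pn n)" "\<And>n. bounded_by (Pn n) B" "\<And>n. L \<le> Jr (Pn n)"
    and "\<And>x. x \<in> \<Omega> \<Longrightarrow> incseq (\<lambda>n. Pn n x)"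
  shows "rc_concave (\<lambda>x. SUP n. Pn n x)" "bounded_by (\<lambda>x. SUP n. Pn n x) B"
    "L \<le> Jr (\<lambda>x. SUP n. Pn n x)" "\<And>x n. x \<in> \<Omega> \<Longrightarrow> Pn n x \<le> (SUP n. Pn n x)"
proof -
  have bdd: "bdd_above (range (\<lambda>n. Pn n x))" if "x \<in> \<Omega>" for x
    using bounded_byD[OF assms(2) that] by (intro bdd_aboveI[of _ B]) (auto simp: abs_le_iff)
  then have "(\<lambda>n. Pn n x) \<longlonglongrightarrow> (SUP n. Pn n x)" if "x \<in> \<Omega>" for x
    using assms(4) that by (intro LIMSEQ_incseq_SUP) auto
  note limit = rc_concave_limit[where P = "\<lambda>x. SUP n. Pn n x", OF assms(1,2) this assms(3)]
  show "rc_concave (\<lambda>x. SUP n. Pn n x)" "bounded_by (\<lambda>x. SUP n. Pn n x) B"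
    "L \<le> Jr (\<lambda>x. SUP n. Pn n x)"
    by (simp_all add: limit)
  show "Pn n x \<le> (SUP n. Pn n x)" if "x \<in> \<Omega>" for x n
    using bdd[OF that] by (rule cSUP_upper[rotated]) simp
qed

lemma decseq_rc_concave_limit:
  assumes "\<And>n. rc_concave (Pn n)" "\<And>n. bounded_by (Pn n) B" "\<And>x. x \<in> \<Omega> \<Longrightarrow> decseq (\<lambda>n. Pn n x)"
    and "\<And>n m. n \<le> m \<Longrightarrow> L n \<le> Jr (Pn m)"
  shows "rc_concave (\<lambda>x. INF n. Pn n x)" "bounded_by (\<lambda>x. INF n. Pn n x) B"
    "\<And>n. L n \<le> Jr (\<lambda>x. INF n. Pn n x)"
proof -
  have "bdd_below (range (\<lambda>n. Pn n x))" if "x \<in> \<Omega>" for x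
  proof (rule bdd_belowI[of _ "- B"])
    fix y assume "y \<in> range (\<lambda>n. Pn n x)"
    then obtain n where "y = Pn n x" by blast
    with bounded_byD[OF assms(2) that, of n] show "- B \<le> y" by simp
  qed
  then have lim: "(\<lambda>n. Pn n x) \<longlonglongrightarrow> (INF n. Pn n x)" if "x \<in> \<Omega>" for x
    using assms(3) that by (intro LIMSEQ_decseq_INF) auto
  have tail: "(\<lambda>k. Pn (n + k) x) \<longlonglongrightarrow> (INF n. Pn n x)" if "x \<in> \<Omega>" for x n
    using LIMSEQ_ignore_initial_segment[OF lim[OF that], of n] by (simp add: add.commute)
  have "rc_concave (\<lambda>x. INF n. Pn n x) \<and> bounded_by (\<lambda>x. INF n. Pn n x) B \<and> L n \<le> Jr (\<lambda>x. INF n. Pn n x)"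
    for n
    using rc_concave_limit[where Pn = "\<lambda>k. Pn (n + k)", OF assms(1,2) tail assms(4)[OF le_add1]] by blast
  then show "rc_concave (\<lambda>x. INF n. Pn n x)" "bounded_by (\<lambda>x. INF n. Pn n x) B"
    "\<And>n. L n \<le> Jr (\<lambda>x. INF n. Pn n x)"
    by blast+
qed


section \<open>Maximisers of the dual functional\<close>

definition potentials :: "('a \<Rightarrow> real) set" where
  "potentials = {P. rc_concave P \<and> (\<exists>B. bounded_by P B)}"

definition J_sup :: real where
  "J_sup = (SUP P\<in>potentials. Jr P)"

lemma zero_in_potentials: "(\<lambda>_. 0) \<in> potentials"
proof -
  have bounded: "bounded_by (\<lambda>_. 0) 0"
    unfolding bounded_by_def by simp
  have "rctrans (\<lambda>_. 0) y = 0" if "y \<in> \<Omega>" for y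
  proof (rule antisym)
    show "rctrans (\<lambda>_. 0) y \<le> 0"
      using rctrans_le[OF bounded that that] c_diag[of y] by simp
    show "0 \<le> rctrans (\<lambda>_. 0) y"
      using c_nonneg by (intro rctrans_greatest[OF bounded that]) simp
  qed
  then have "rctrans_bar (rctrans (\<lambda>_. 0)) = rctrans_bar (\<lambda>_. 0)"
    by (rule rctrans_bar_cong)
  moreover have "rctrans_bar (\<lambda>_. 0) x = 0" if "x \<in> \<Omega>" for x
  proof (rule antisym)
    show "rctrans_bar (\<lambda>_. 0) x \<le> 0"
      using c_nonneg by (intro rctrans_bar_least[OF bounded that]) simp
    show "0 \<le> rctrans_bar (\<lambda>_. 0) x"
      using rctrans_bar_ge[OF bounded that that] c_diag[of x] by simp
  qed
  ultimately show ?thesis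
    unfolding potentials_def rc_concave_def using bounded by auto
qed

lemma bdd_above_Jr: "bdd_above (Jr ` potentials)"
  using Jr_le_J_bound unfolding potentials_def by (intro bdd_aboveI[of _ J_bound]) auto

lemma Jr_le_J_sup: "P \<in> potentials \<Longrightarrow> Jr P \<le> J_sup"
  unfolding J_sup_def by (rule cSUP_upper[OF _ bdd_above_Jr])

lemma J_sup_approx: "e > 0 \<Longrightarrow> \<exists>P\<in>potentials. J_sup - e < Jr P"
  using less_cSUP_iff[OF _ bdd_above_Jr, of "J_sup - e"] zero_in_potentials
  unfolding J_sup_def by force

definition near_max_bound :: real where
  "near_max_bound = level_bound (J_sup - 1)"

lemma bounded_by_near_max_bound: "P \<in> potentials \<Longrightarrow> J_sup - 1 \<le> Jr P \<Longrightarrow> bounded_by P near_max_bound"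
  unfolding potentials_def near_max_bound_def using bounded_by_level_bound by blast

lemma max_in_potentials:
  assumes "P1 \<in> potentials" "P2 \<in> potentials"
  shows "(\<lambda>x. max (P1 x) (P2 x)) \<in> potentials" "Jr P1 + Jr P2 - J_sup \<le> Jr (\<lambda>x. max (P1 x) (P2 x))"
proof -
  obtain B1 B2 where "rc_concave P1" "bounded_by P1 B1" "rc_concave P2" "bounded_by P2 B2"
    using assms unfolding potentials_def by blast
  then have "rc_concave P1" "bounded_by P1 (max B1 B2)" "rc_concave P2" "bounded_by P2 (max B1 B2)"
    by (auto intro: bounded_by_mono)
  note P = this
  show "(\<lambda>x. max (P1 x) (P2 x)) \<in> potentials"
    unfolding potentials_def using rc_concave_max[OF P] bounded_by_max[OF P(2,4)] by blast
  have "rctrans_bar (rctrans (\<lambda>x. min (P1 x) (P2 x))) \<in> potentials"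
    unfolding potentials_def using bounded_by_min[OF P(2,4)]
    by (blast intro: rc_concave_rctrans_bar bounded_by_rctrans_bar bounded_by_rctrans)
  then show "Jr P1 + Jr P2 - J_sup \<le> Jr (\<lambda>x. max (P1 x) (P2 x))"
    using Jr_supermodular[OF P] Jr_le_J_sup by fastforce
qed

lemma running_max_near_max:
  assumes "\<And>i. p i \<in> potentials" "\<And>i. J_sup - e * (1 / 2) ^ i < Jr (p i)"
  shows "running_max p n m \<in> potentials" "J_sup - 2 * e * (1 / 2) ^ n \<le> Jr (running_max p n m)"
proof -
  show "running_max p n m \<in> potentials"
    using max_in_potentials(1) assms(1) by (rule running_max_closed)
  then have "J_sup - (2 * e * (1 / 2) ^ n - e * (1 / 2) ^ (n + m)) \<le> Jr (running_max p n m)"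
  proof (induction m)
    case 0
    then show ?case
      using assms(2)[of n] by simp
  next
    case (Suc m)
    have "running_max p n m \<in> potentials"
      using max_in_potentials(1) assms(1) by (rule running_max_closed)
    with Suc.IH have "J_sup - (2 * e * (1 / 2) ^ n - e * (1 / 2) ^ (n + m)) \<le> Jr (running_max p n m)"
      by blast
    moreover have "Jr (running_max p n m) + Jr (p (n + Suc m)) - J_sup \<le> Jr (running_max p n (Suc m))"
      using max_in_potentials(2)[OF \<open>running_max p n m \<in> potentials\<close> assms(1)] by simp
    moreover have "e * (1 / 2) ^ (n + m) = 2 * (e * (1 / 2) ^ (n + Suc m))"
      by simp
    ultimately show ?case
      using assms(2)[of "n + Suc m"] by linarith
  qed
  moreover have "0 \<le> e * (1 / 2) ^ (n + m)"
    using assms(2)[of 0] Jr_le_J_sup[OF assms(1)[of 0]] by (simp add: zero_le_mult_iff)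
  ultimately show "J_sup - 2 * e * (1 / 2) ^ n \<le> Jr (running_max p n m)"
    by linarith
qed


lemma ex_decseq_near_max:
  obtains r :: "nat \<Rightarrow> 'a \<Rightarrow> real"
  where "\<And>n. rc_concave (r n)" "\<And>n. bounded_by (r n) near_max_bound"
    "\<And>n. J_sup - (1 / 2) ^ Suc n \<le> Jr (r n)" "\<And>x. x \<in> \<Omega> \<Longrightarrow> decseq (\<lambda>n. r n x)"
proof -
  have "\<forall>i. \<exists>P\<in>potentials. J_sup - 1 / 4 * (1 / 2) ^ i < Jr P"
    by (simp add: J_sup_approx)
  then obtain p where p: "\<And>i. p i \<in> potentials" "\<And>i. J_sup - 1 / 4 * (1 / 2) ^ i < Jr (p i)"
    by metis
  note run = running_max_near_max[OF p]
  have near: "J_sup - (1 / 2) ^ Suc n \<le> Jr (running_max p n m)" for n m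
    using run(2)[of n m] by simp
  have "J_sup - 1 \<le> Jr (running_max p n m)" for n m
    using near[of n m] power_le_one[of "1 / 2 :: real" "Suc n"] by simp
  then have "rc_concave (running_max p n m)" "bounded_by (running_max p n m) near_max_bound" for n m
    using run(1) bounded_by_near_max_bound unfolding potentials_def by auto
  note sup_limit = incseq_rc_concave_limit[OF this near incseq_running_max]
  define r where "r n x = (SUP m. running_max p n m x)" for n x
  have "r (Suc n) x \<le> r n x" if "x \<in> \<Omega>" for n x
    unfolding r_def using order_trans[OF running_max_Suc_le sup_limit(4)[OF that]] by (intro cSUP_least) auto
  then have "decseq (\<lambda>n. r n x)" if "x \<in> \<Omega>" for x
    using that by (intro decseq_SucI) auto
  moreover have "rc_concave (r n)" "bounded_by (r n) near_max_bound" "J_sup - (1 / 2) ^ Suc n \<le> Jr (r n)"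
    for n
    unfolding r_def[abs_def] by (fact sup_limit)+
  ultimately show thesis
    using that by blast
qed

lemma exists_maximizer: "\<exists>q\<in>potentials. Jr q = J_sup"
proof -
  obtain r :: "nat \<Rightarrow> 'a \<Rightarrow> real" where r: "\<And>n. rc_concave (r n)" "\<And>n. bounded_by (r n) near_max_bound"
    "\<And>n. J_sup - (1 / 2) ^ Suc n \<le> Jr (r n)" and r_decseq: "\<And>x. x \<in> \<Omega> \<Longrightarrow> decseq (\<lambda>n. r n x)"
    using ex_decseq_near_max by blast
  have r_near: "J_sup - (1 / 2) ^ Suc n \<le> Jr (r m)" if "n \<le> m" for n m
  proof -
    have "(1 / 2 :: real) ^ Suc m \<le> (1 / 2) ^ Suc n"
      using that by (intro power_decreasing) auto
    with r(3)[of m] show ?thesis by linarith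
  qed
  note inf_limit = decseq_rc_concave_limit[of r near_max_bound "\<lambda>n. J_sup - (1 / 2) ^ Suc n",
      OF r(1,2) r_decseq r_near]
  define q where "q x = (INF n. r n x)" for x
  have "q \<in> potentials"
    unfolding potentials_def q_def using inf_limit(1,2) by blast
  moreover have "J_sup \<le> Jr q"
  proof (rule field_le_epsilon)
    fix e :: real assume "e > 0"
    then obtain n where "(1 / 2) ^ n < e"
      using real_arch_pow_inv[of e "1 / 2"] by auto
    moreover have "J_sup - (1 / 2) ^ Suc n \<le> Jr q"
      unfolding q_def by (rule inf_limit(3))
    moreover have "(1 / 2 :: real) ^ Suc n \<le> (1 / 2) ^ n"
      by (intro power_decreasing) auto
    ultimately show "J_sup \<le> Jr q + e"
      by linarith
  qed
  ultimately show ?thesis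
    using Jr_le_J_sup by (intro bexI[of _ q]) (auto intro: antisym)
qed

definition maximizers :: "('a \<Rightarrow> real) set" where
  "maximizers = {P\<in>potentials. Jr P = J_sup}"

lemma maximizersD:
  assumes "P \<in> maximizers"
  shows "rc_concave P" "bounded_by P near_max_bound" "Jr P = J_sup"
  using assms bounded_by_near_max_bound unfolding maximizers_def potentials_def by auto

lemma max_in_maximizers:
  assumes "P1 \<in> maximizers" "P2 \<in> maximizers"
  shows "(\<lambda>x. max (P1 x) (P2 x)) \<in> maximizers"
proof -
  have "P1 \<in> potentials" "P2 \<in> potentials"
    using assms unfolding maximizers_def by auto
  note max = max_in_potentials[OF this]
  with assms Jr_le_J_sup[OF max(1)] show ?thesis
    unfolding maximizers_def by auto
qed

lemma maximizers_approximate_sup: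
  assumes "countable E" "E \<subseteq> \<Omega>" "E \<noteq> {}"
  obtains p :: "nat \<Rightarrow> 'a \<Rightarrow> real" where "\<And>n. p n \<in> maximizers"
    and "\<And>d P e. d \<in> E \<Longrightarrow> P \<in> maximizers \<Longrightarrow> e > 0 \<Longrightarrow> \<exists>n. P d < p n d + e"
proof -
  have "maximizers \<noteq> {}"
    using exists_maximizer unfolding maximizers_def by blast
  define T where "T d = (SUP P\<in>maximizers. P d)" for d
  have bdd: "bdd_above ((\<lambda>P. P d) ` maximizers)" if "d \<in> \<Omega>" for d
    using bounded_byD[OF maximizersD(2) that] by (intro bdd_aboveI[of _ near_max_bound]) (auto simp: abs_le_iff)
  define \<phi> where "\<phi> = from_nat_into (E \<times> (UNIV :: nat set))"
  have "countable (E \<times> (UNIV :: nat set))" "E \<times> (UNIV :: nat set) \<noteq> {}"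
    using assms(1,3) by auto
  note enum = from_nat_into[OF this(2)] from_nat_into_surj[OF this(1)]
  have "\<exists>P\<in>maximizers. T (fst (\<phi> n)) - 1 / Suc (snd (\<phi> n)) < P (fst (\<phi> n))" for n
  proof -
    have "fst (\<phi> n) \<in> \<Omega>"
      using enum(1)[of n] assms(2) unfolding \<phi>_def by auto
    then show ?thesis
      using less_cSUP_iff[OF \<open>maximizers \<noteq> {}\<close> bdd[OF \<open>fst (\<phi> n) \<in> \<Omega>\<close>], of "T (fst (\<phi> n)) - 1 / Suc (snd (\<phi> n))"]
      unfolding T_def by simp
  qed
  then obtain p where p: "\<And>n. p n \<in> maximizers"
    "\<And>n. T (fst (\<phi> n)) - 1 / Suc (snd (\<phi> n)) < p n (fst (\<phi> n))"
    by metis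
  have "\<exists>n. P d < p n d + e" if "d \<in> E" "P \<in> maximizers" "e > 0" for d P e
  proof -
    obtain k where "1 / Suc k < e"
      using \<open>e > 0\<close> by (metis nat_approx_posE)
    obtain n where "\<phi> n = (d, k)"
      using enum(2) \<open>d \<in> E\<close> unfolding \<phi>_def by blast
    moreover have "P d \<le> T d"
      unfolding T_def using that(1,2) assms(2) by (intro cSUP_upper bdd) auto
    ultimately show ?thesis
      using p(2)[of n] \<open>1 / Suc k < e\<close> by (intro exI[of _ n]) simp
  qed
  with p(1) show thesis by (rule that)
qed

lemma SUP_running_max_in_maximizers:
  assumes "\<And>n. p n \<in> maximizers"
  shows "(\<lambda>x. SUP m. running_max p 0 m x) \<in> maximizers"
    "\<And>n x. x \<in> \<Omega> \<Longrightarrow> p n x \<le> (SUP m. running_max p 0 m x)"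
proof -
  have "running_max p 0 m \<in> maximizers" for m
    using max_in_maximizers assms by (rule running_max_closed)
  then have "rc_concave (running_max p 0 m)" "bounded_by (running_max p 0 m) near_max_bound"
    "J_sup \<le> Jr (running_max p 0 m)" for m
    using maximizersD by auto
  note sup_limit = incseq_rc_concave_limit[OF this incseq_running_max]
  have "(\<lambda>x. SUP m. running_max p 0 m x) \<in> potentials"
    using sup_limit(1,2) unfolding potentials_def by blast
  with sup_limit(3) Jr_le_J_sup show "(\<lambda>x. SUP m. running_max p 0 m x) \<in> maximizers"
    unfolding maximizers_def by (simp add: order_antisym)
  show "p n x \<le> (SUP m. running_max p 0 m x)" if "x \<in> \<Omega>" for n x
    using running_max_ge[of n n p 0 x] sup_limit(4)[OF that, of n] by simp
qed

lemma largest_maximizer: "\<exists>U\<in>maximizers. \<forall>P\<in>maximizers. \<forall>x\<in>\<Omega>. P x \<le> U x"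
proof -
  obtain E where E: "countable E" "E \<subseteq> \<Omega>" "\<Omega> \<subseteq> closure E"
    by (rule separable)
  then have "E \<noteq> {}"
    using \<Omega>_nonempty by auto
  obtain p :: "nat \<Rightarrow> 'a \<Rightarrow> real" where p: "\<And>n. p n \<in> maximizers"
    and approx: "\<And>d P e. d \<in> E \<Longrightarrow> P \<in> maximizers \<Longrightarrow> e > 0 \<Longrightarrow> \<exists>n. P d < p n d + e"
    using maximizers_approximate_sup[OF E(1,2) \<open>E \<noteq> {}\<close>] by blast
  define U where "U x = (SUP m. running_max p 0 m x)" for x
  have "U \<in> maximizers" and p_le_U: "\<And>n x. x \<in> \<Omega> \<Longrightarrow> p n x \<le> U x"
    unfolding U_def[abs_def] using SUP_running_max_in_maximizers[OF p] by simp_all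
  moreover have "P x \<le> U x" if "P \<in> maximizers" "x \<in> \<Omega>" for P x
  proof (rule le_at_closure_point[OF _ _ open_\<Omega> \<open>x \<in> \<Omega>\<close>])
    show "continuous_on \<Omega> P" "continuous_on \<Omega> U"
      using maximizersD[OF \<open>P \<in> maximizers\<close>] maximizersD[OF \<open>U \<in> maximizers\<close>]
      by (auto intro: continuous_on_rc_concave)
    show "x \<in> closure E"
      using E(3) \<open>x \<in> \<Omega>\<close> by blast
    show "P d \<le> U d" if "d \<in> E" for d
    proof (rule field_le_epsilon)
      fix e :: real assume "e > 0"
      then obtain n where "P d < p n d + e"
        using approx[OF \<open>d \<in> E\<close> \<open>P \<in> maximizers\<close>] by blast
      moreover have "p n d \<le> U d"
        using p_le_U \<open>d \<in> E\<close> E(2) by blast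
      ultimately show "P d \<le> U d + e"
        by simp
    qed
  qed
  ultimately show ?thesis by blast
qed


section \<open>Extended-real c-concave potentials\<close>

lemma c_concave_oscillation:
  assumes "c_concave \<Omega> c p" "x \<in> \<Omega>" "x' \<in> \<Omega>"
  shows "p x \<le> p x' + ereal c_max"
proof -
  let ?q = "ctrans \<Omega> c p"
  have p: "p z = (SUP y\<in>\<Omega>. ?q y - ereal (c z y))" if "z \<in> \<Omega>" for z
    using assms(1) that unfolding c_concave_def ctrans_bar_def by simp
  have "?q y - ereal (c x y) \<le> p x' + ereal c_max" if "y \<in> \<Omega>" for y
  proof -
    have le: "?q y - ereal (c x' y) \<le> p x'"
      unfolding p[OF assms(3)] using that by (rule SUP_upper)
    have "c x' y \<le> c_max + c x y"
      using c_le_c_max[OF assms(3) that] c_nonneg[of x y] by simp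
    show ?thesis
    proof (cases "?q y")
      case (real r)
      then have "?q y - ereal (c x y) \<le> (?q y - ereal (c x' y)) + ereal c_max"
        using \<open>c x' y \<le> c_max + c x y\<close> by simp
      also have "\<dots> \<le> p x' + ereal c_max"
        using le by (rule add_right_mono)
      finally show ?thesis .
    qed (use le in auto)
  qed
  then show ?thesis
    unfolding p[OF assms(2)] by (rule SUP_least)
qed

lemma c_concave_cases:
  assumes "c_concave \<Omega> c p"
  shows "(\<forall>x\<in>\<Omega>. p x = \<infinity>) \<or> (\<forall>x\<in>\<Omega>. p x = -\<infinity>) \<or>
    (\<exists>P B. bounded_by P B \<and> (\<forall>x\<in>\<Omega>. p x = ereal (P x)))"
proof (cases "\<exists>x\<in>\<Omega>. p x = \<infinity>")
  case True
  then obtain x where "x \<in> \<Omega>" "p x = \<infinity>" by blast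
  have "p x' = \<infinity>" if "x' \<in> \<Omega>" for x'
    using c_concave_oscillation[OF assms \<open>x \<in> \<Omega>\<close> that] \<open>p x = \<infinity>\<close> by (cases "p x'") auto
  then show ?thesis by blast
next
  case no_PInf: False
  show ?thesis
  proof (cases "\<exists>x\<in>\<Omega>. p x = -\<infinity>")
    case True
    then obtain x where "x \<in> \<Omega>" "p x = -\<infinity>" by blast
    have "p x' = -\<infinity>" if "x' \<in> \<Omega>" for x'
      using c_concave_oscillation[OF assms that \<open>x \<in> \<Omega>\<close>] \<open>p x = -\<infinity>\<close> by (cases "p x'") auto
    then show ?thesis by blast
  next
    case False
    obtain x0 where "x0 \<in> \<Omega>"
      using \<Omega>_nonempty by blast
    define P where "P x = real_of_ereal (p x)" for x
    have finite: "p x = ereal (P x)" if "x \<in> \<Omega>" for x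
      using no_PInf False that unfolding P_def by (cases "p x") auto
    have "\<bar>P x\<bar> \<le> \<bar>P x0\<bar> + c_max" if "x \<in> \<Omega>" for x
      using c_concave_oscillation[OF assms that \<open>x0 \<in> \<Omega>\<close>] c_concave_oscillation[OF assms \<open>x0 \<in> \<Omega>\<close> that]
      unfolding finite[OF that] finite[OF \<open>x0 \<in> \<Omega>\<close>] by simp
    with finite show ?thesis
      unfolding bounded_by_def by blast
  qed
qed

lemma ctrans_cong: "(\<And>x. x \<in> \<Omega> \<Longrightarrow> p x = p' x) \<Longrightarrow> ctrans \<Omega> c p = ctrans \<Omega> c p'"
  unfolding ctrans_def by (intro ext INF_cong) auto

lemma Jstar_cong:
  assumes "\<And>x. x \<in> \<Omega> \<Longrightarrow> p x = p' x"
  shows "Jstar \<Omega> s c p \<rho> = Jstar \<Omega> s c p' \<rho>"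
proof -
  have "Estar \<Omega> s p = Estar \<Omega> s p'"
    unfolding Estar_eq_nn_integral by (intro arg_cong[where f = enn2ereal] nn_integral_cong) (simp add: assms)
  moreover have "ctrans \<Omega> c p = ctrans \<Omega> c p'"
    using assms by (rule ctrans_cong)
  ultimately show ?thesis
    unfolding Jstar_def by simp
qed

lemma c_concave_cong:
  assumes "\<And>x. x \<in> \<Omega> \<Longrightarrow> p x = p' x"
  shows "c_concave \<Omega> c p \<longleftrightarrow> c_concave \<Omega> c p'"
proof -
  have "ctrans \<Omega> c p = ctrans \<Omega> c p'"
    using assms by (rule ctrans_cong)
  with assms show ?thesis
    unfolding c_concave_def by auto
qed

lemma sets_Leb_\<rho>_positive: "{x\<in>\<Omega>. 0 < \<rho> x} \<in> sets Leb"
proof -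
  have "{x\<in>space Leb. 0 < \<rho> x} \<in> sets Leb"
    using integrable_\<rho> by measurable
  then show ?thesis by simp
qed

lemma emeasure_\<rho>_positive: "emeasure Leb {x\<in>\<Omega>. 0 < \<rho> x} \<noteq> 0"
proof
  note N = sets_Leb_\<rho>_positive
  assume "emeasure Leb {x\<in>\<Omega>. 0 < \<rho> x} = 0"
  with N have "AE x in Leb. \<rho> x \<le> 0"
    by (intro AE_I'[of "{x\<in>\<Omega>. 0 < \<rho> x}"]) auto
  then have "mass \<le> integral\<^sup>L Leb (\<lambda>_. 0::real)"
    unfolding mass_def by (intro integral_mono_AE integrable_\<rho>) auto
  with mass_pos show False by simp
qed

lemma Jstar_MInf:
  assumes "\<And>x. x \<in> \<Omega> \<Longrightarrow> p x = -\<infinity>"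
  shows "Jstar \<Omega> s c p \<rho> = -\<infinity>"
proof -
  have q: "ctrans \<Omega> c p y = -\<infinity>" if "y \<in> \<Omega>" for y
    using INF_lower[OF that, of "\<lambda>x. p x + ereal (c x y)"] assms[OF that]
    unfolding ctrans_def by simp
  have "AE x in Leb. e2ennreal (ereal (\<rho> x) * ctrans \<Omega> c p x) = 0"
    using \<rho>_nonneg
  proof (rule AE_mp, intro AE_I2 impI)
    fix x assume "x \<in> space Leb" "0 \<le> \<rho> x"
    then have "ereal (\<rho> x) * ctrans \<Omega> c p x \<le> 0"
      using q[of x] by (cases "\<rho> x = 0") (auto simp: zero_ereal_def[symmetric])
    then show "e2ennreal (ereal (\<rho> x) * ctrans \<Omega> c p x) = 0"
      by (rule e2ennreal_neg)
  qed
  then have "(\<integral>\<^sup>+x. e2ennreal (ereal (\<rho> x) * ctrans \<Omega> c p x) \<partial>Leb) = (\<integral>\<^sup>+x. 0 \<partial>Leb)"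
    by (rule nn_integral_cong_AE)
  then have pos: "(\<integral>\<^sup>+x. e2ennreal (ereal (\<rho> x) * ctrans \<Omega> c p x) \<partial>Leb) = 0"
    by simp
  have "top * emeasure Leb {x\<in>\<Omega>. 0 < \<rho> x}
      = (\<integral>\<^sup>+x. top * indicator {x\<in>\<Omega>. 0 < \<rho> x} x \<partial>Leb)"
    using sets_Leb_\<rho>_positive by (rule nn_integral_cmult_indicator[symmetric])
  also have "\<dots> \<le> (\<integral>\<^sup>+x. e2ennreal (- (ereal (\<rho> x) * ctrans \<Omega> c p x)) \<partial>Leb)"
    using q by (intro nn_integral_mono) (auto simp: indicator_def)
  finally have neg: "(\<integral>\<^sup>+x. e2ennreal (- (ereal (\<rho> x) * ctrans \<Omega> c p x)) \<partial>Leb) = top"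
    using emeasure_\<rho>_positive by (simp add: ennreal_top_mult top_unique)
  have "eintegral \<Omega> (\<lambda>y. ereal (\<rho> y) * ctrans \<Omega> c p y) = -\<infinity>"
    unfolding eintegral_def pos neg by (simp add: zero_ennreal.rep_eq)
  moreover have "0 \<le> Estar \<Omega> s p"
    unfolding Estar_eq_nn_integral by (rule enn2ereal_nonneg)
  ultimately show ?thesis
    unfolding Jstar_def by (cases "Estar \<Omega> s p") auto
qed

lemma Estar_PInf:
  assumes "\<And>x. x \<in> \<Omega> \<Longrightarrow> p x = \<infinity>"
  shows "Estar \<Omega> s p = \<infinity>"
proof -
  define I where "I = (\<integral>\<^sup>+x. e2ennreal (sconj s (p x) x) \<partial>Leb)"
  have lower: "ennreal ((t - b0) * (mass + \<delta>0)) \<le> I" if "b0 \<le> t" for t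
  proof -
    have "ennreal ((t - b0) * (mass + \<delta>0)) \<le> dual_energy (\<lambda>_. t)"
      using that by (rule dual_energy_coercive) simp
    also have "\<dots> \<le> I"
      unfolding dual_energy_def I_def
    proof (intro nn_integral_mono)
      fix x assume "x \<in> space Leb"
      then have "x \<in> \<Omega>" by simp
      then have "sconj s (ereal t) x \<le> sconj s (p x) x"
        using assms by (intro sconj_mono) auto
      then show "ennreal (sstar t x) \<le> e2ennreal (sconj s (p x) x)"
        using sconj_eq_sstar[OF \<open>x \<in> \<Omega>\<close>] by (metis e2ennreal_ereal e2ennreal_mono)
    qed
    finally show ?thesis .
  qed
  have "I = top"
  proof (rule ccontr)
    assume "I \<noteq> top"
    then obtain r where r: "I = ennreal r" "0 \<le> r"
      by (cases I rule: ennreal_cases) auto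
    have "mass + \<delta>0 > 0"
      using mass_pos \<delta>0_pos by simp
    then have "ennreal (r + 1) \<le> ennreal r"
      using lower[of "b0 + (r + 1) / (mass + \<delta>0)"] r by simp
    with r(2) show False
      by (simp add: ennreal_le_iff)
  qed
  then show ?thesis
    unfolding Estar_eq_nn_integral I_def[symmetric] by simp
qed

lemma c_concave_real_potential:
  assumes "c_concave \<Omega> c p" "bounded_by P B" "\<And>x. x \<in> \<Omega> \<Longrightarrow> p x = ereal (P x)"
  shows "P \<in> potentials" "Jstar \<Omega> s c p \<rho> = ereal (Jr P)"
proof -
  have "rc_concave P"
    using assms c_concave_cong[of p "\<lambda>x. ereal (P x)"] c_concave_iff_rc_concave[OF assms(2)] by simp
  with assms(2) show "P \<in> potentials"
    unfolding potentials_def by blast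
  show "Jstar \<Omega> s c p \<rho> = ereal (Jr P)"
    using Jstar_cong[of p "\<lambda>x. ereal (P x)"] Jstar_eq_Jr[OF assms(2)] assms(3) by simp
qed

lemma Jstar_le_J_sup:
  assumes "q \<in> Xstar \<Omega> s" "c_concave \<Omega> c q"
  shows "Jstar \<Omega> s c q \<rho> \<le> ereal J_sup"
  using c_concave_cases[OF assms(2)]
proof (elim disjE exE conjE)
  assume "\<forall>x\<in>\<Omega>. q x = \<infinity>"
  with assms(1) show ?thesis
    using Estar_PInf unfolding Xstar_def by simp
next
  assume "\<forall>x\<in>\<Omega>. q x = -\<infinity>"
  then show ?thesis
    using Jstar_MInf by simp
next
  fix P B assume "bounded_by P B" "\<forall>x\<in>\<Omega>. q x = ereal (P x)"
  with c_concave_real_potential[OF assms(2)] Jr_le_J_sup show ?thesis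
    by simp
qed

lemma maximizer_in_Sigma_max:
  assumes "U \<in> maximizers"
  shows "(\<lambda>x. ereal (U x)) \<in> Sigma_max \<Omega> s c \<rho>"
proof -
  note U = maximizersD[OF assms]
  have "(\<lambda>x. ereal (U x)) \<in> borel_measurable Leb"
    using measurable_if_continuous_on[OF continuous_on_rc_concave[OF U(1,2)]] by simp
  moreover have "Estar \<Omega> s (\<lambda>x. ereal (U x)) < \<infinity>"
    using dual_energy_finite[OF U(2)] unfolding Estar_eq_dual_energy by (simp add: less_top[symmetric])
  ultimately have "(\<lambda>x. ereal (U x)) \<in> Xstar \<Omega> s"
    unfolding Xstar_def by simp
  moreover have "c_concave \<Omega> c (\<lambda>x. ereal (U x))"
    using c_concave_iff_rc_concave[OF U(2)] U(1) by simp
  ultimately show ?thesis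
    unfolding Sigma_max_def using Jstar_le_J_sup Jstar_eq_Jr[OF U(2)] U(3) by auto
qed

lemma Sigma_max_imp_maximizer:
  assumes "p \<in> Sigma_max \<Omega> s c \<rho>"
  shows "\<exists>P\<in>maximizers. \<forall>x\<in>\<Omega>. p x = ereal (P x)"
proof -
  obtain U where "U \<in> maximizers"
    using exists_maximizer unfolding maximizers_def by blast
  have "Jstar \<Omega> s c (\<lambda>x. ereal (U x)) \<rho> = ereal J_sup"
    using Jstar_eq_Jr maximizersD[OF \<open>U \<in> maximizers\<close>] by simp
  with assms maximizer_in_Sigma_max[OF \<open>U \<in> maximizers\<close>]
  have p: "p \<in> Xstar \<Omega> s" "c_concave \<Omega> c p" "ereal J_sup \<le> Jstar \<Omega> s c p \<rho>"
    unfolding Sigma_max_def by auto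
  from c_concave_cases[OF p(2)] show ?thesis
  proof (elim disjE exE conjE)
    assume "\<forall>x\<in>\<Omega>. p x = \<infinity>"
    with p(1) show ?thesis
      using Estar_PInf unfolding Xstar_def by simp
  next
    assume "\<forall>x\<in>\<Omega>. p x = -\<infinity>"
    with p(3) show ?thesis
      using Jstar_MInf by simp
  next
    fix P B assume P: "bounded_by P B" "\<forall>x\<in>\<Omega>. p x = ereal (P x)"
    with c_concave_real_potential[OF p(2)] p(3) Jr_le_J_sup have "P \<in> maximizers"
      unfolding maximizers_def by (simp add: order_antisym)
    with P(2) show ?thesis by blast
  qed
qed

lemma largest_in_Sigma_max: "\<exists>pstar \<in> Sigma_max \<Omega> s c \<rho>. \<forall>p \<in> Sigma_max \<Omega> s c \<rho>. \<forall>x\<in>\<Omega>. p x \<le> pstar x"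
proof -
  obtain U where "U \<in> maximizers" and U: "\<forall>P\<in>maximizers. \<forall>x\<in>\<Omega>. P x \<le> U x"
    using largest_maximizer by blast
  have "p x \<le> ereal (U x)" if p: "p \<in> Sigma_max \<Omega> s c \<rho>" and "x \<in> \<Omega>" for p x
  proof -
    obtain P where "P \<in> maximizers" "\<forall>x\<in>\<Omega>. p x = ereal (P x)"
      using Sigma_max_imp_maximizer[OF p] by blast
    moreover from this(1) have "P x \<le> U x"
      using U \<open>x \<in> \<Omega>\<close> by blast
    ultimately show ?thesis
      using \<open>x \<in> \<Omega>\<close> by simp
  qed
  then show ?thesis
    using maximizer_in_Sigma_max[OF \<open>U \<in> maximizers\<close>] by (intro bexI[of _ "\<lambda>x. ereal (U x)"]) auto
qed

end

lemma dual_problem_if_standing_assumptions: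
  fixes \<Omega> :: "'a::euclidean_space set"
  assumes "bounded_smooth_domain \<Omega>" "entropy_density \<Omega> s" "admissible_cost c" "\<rho> \<in> Xspace \<Omega> s"
    and "condN \<Omega> s \<rho>"
  obtains s_min where "dual_problem \<Omega> s c \<rho> s_min"
proof -
  have \<Omega>: "open \<Omega>" "bounded \<Omega>" "\<Omega> \<noteq> {}"
    using assms(1) unfolding bounded_smooth_domain_def by auto
  have s: "\<forall>x\<in>\<Omega>. \<forall>z. s z x \<noteq> -\<infinity>" "\<forall>x\<in>\<Omega>. \<forall>z<0. s z x = \<infinity>" "\<forall>x\<in>\<Omega>. s 0 x = 0"
    "((\<lambda>z. (INF x\<in>\<Omega>. s z x) / ereal z) \<longlongrightarrow> \<infinity>) at_top"
    using assms(2) unfolding entropy_density_def by blast+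
  obtain s_min where s_min: "\<forall>x\<in>\<Omega>. \<forall>z. ereal s_min \<le> s z x"
    using assms(2) unfolding entropy_density_def by blast
  have c: "\<forall>x y. 0 \<le> c x y" "\<forall>x. c x x = 0" "Ck_on 1 UNIV (\<lambda>(x, y). c x y)"
    using assms(3) unfolding admissible_cost_def by blast+
  have "(\<lambda>(x, y). c x y) differentiable_on UNIV"
    using c(3) by simp
  then have "continuous_on UNIV (\<lambda>(x, y). c x y)"
    by (rule differentiable_imp_continuous_on)
  moreover have "integrable (lebesgue_on \<Omega>) \<rho>" "Efun \<Omega> s \<rho> < \<infinity>"
    using assms(4) unfolding Xspace_def by auto
  ultimately have "dual_problem \<Omega> s c \<rho> s_min"
    using \<Omega> s s_min c(1,2) assms(5) by unfold_locales auto
  then show thesis by (rule that)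
qed

theorem lemma3p4:
  fixes \<Omega> :: "'a::euclidean_space set"
    and s :: "real \<Rightarrow> 'a \<Rightarrow> ereal"
    and c :: "'a \<Rightarrow> 'a \<Rightarrow> real"
    and \<rho>bar :: "'a \<Rightarrow> real"
  assumes "bounded_smooth_domain \<Omega>"
    and "entropy_density \<Omega> s"
    and "admissible_cost c"
    and "\<rho>bar \<in> Xspace \<Omega> s"
    and "condN \<Omega> s \<rho>bar"
  shows "\<exists>pstar \<in> Sigma_max \<Omega> s c \<rho>bar.
           (\<forall>p \<in> Sigma_max \<Omega> s c \<rho>bar. \<forall>x\<in>\<Omega>. p x \<le> pstar x) \<and>
           (\<forall>p' \<in> Sigma_max \<Omega> s c \<rho>bar.
              (\<forall>p \<in> Sigma_max \<Omega> s c \<rho>bar. \<forall>x\<in>\<Omega>. p x \<le> p' x) \<longrightarrow> (\<forall>x\<in>\<Omega>. p' x = pstar x))"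
proof -
  obtain s_min where "dual_problem \<Omega> s c \<rho>bar s_min"
    using dual_problem_if_standing_assumptions[OF assms] by blast
  then interpret dual_problem \<Omega> s c \<rho>bar s_min .
  obtain pstar where "pstar \<in> Sigma_max \<Omega> s c \<rho>bar"
    and largest: "\<forall>p \<in> Sigma_max \<Omega> s c \<rho>bar. \<forall>x\<in>\<Omega>. p x \<le> pstar x"
    using largest_in_Sigma_max by blast
  moreover have "\<forall>x\<in>\<Omega>. p' x = pstar x"
    if "p' \<in> Sigma_max \<Omega> s c \<rho>bar" "\<forall>p \<in> Sigma_max \<Omega> s c \<rho>bar. \<forall>x\<in>\<Omega>. p x \<le> p' x" for p'
    using that largest \<open>pstar \<in> Sigma_max \<Omega> s c \<rho>bar\<close> by (blast intro: antisym)
  ultimately show ?thesis by blast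
qed

end
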